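(* For every $n\ge1$, $L^{\mathrm S}_{\mathrm{RCC8}}(\mathbb R^n,\mathbb R^n_{\mathrm{rect}})$ is recursively enumerable.
   Context: $\mathbb R^n_{\mathrm{rect}}$ is the set of closed hyper-rectangles $\prod_{i=1}^n C_i$ with each $C_i$ a non-singleton closed interval of $\mathbb R$. The structure $\mathfrak R(\mathbb R^n,\mathbb R^n_{\mathrm{rect}})$ has domain $\mathbb R^n_{\mathrm{rect}}$ and the eight RCC8 relations w.r.t. the Euclidean interior $\mathbb I$: $\mathrm{dc}$: $s\cap t=\emptyset$; $\mathrm{ec}$: $\mathbb Is\cap\mathbb It=\emptyset\neq s\cap t$; $\mathrm{po}$: $\mathbb Is\cap\mathbb It\ne\emptyset$, $s\not\subseteq t$, $t\not\subseteq s$; $\mathrm{eq}$: $s=t$; $\mathrm{tpp}$: $s\subseteq t$, $s\not\subseteq\mathbb It$, $s\ne t$; $\mathrm{ntpp}$: $s\subseteq\mathbb It$, $s\ne t$; $\mathrm{tppi},\mathrm{ntppi}$ their inverses. $\mathcal L_{\mathrm{RCC8}}$ is the modal language over propositional variables $p_1,p_2,\dots$ with $\neg,\wedge$ and a box $[r]$ for each relation, $\mathfrak M,s\models[r]\varphi$ iff $\varphi$ holds at all $t$ with $(s,t)\in r$. $L^{\mathrm S}_{\mathrm{RCC8}}(\mathbb R^n,\mathbb R^n_{\mathrm{rect}})$ is the set of formulas true at all points of all models based on substructures (restrictions to non-empty subsets of the domain) of $\mathfrak R(\mathbb R^n,\mathbb R^n_{\mathrm{rect}})$. *)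

theory Defs
  imports "HOL-Analysis.Analysis" "HOL-Library.Nat_Bijection"
begin

definition rects :: "(real ^ 'n) set set" where
  "rects = {cbox a b | a b. \<forall>i. a $ i < b $ i}"

datatype rcc8 = DC | EC | PO | EQ | TPP | NTPP | TPPI | NTPPI

fun rcc8_rel :: "rcc8 \<Rightarrow> 'a::topological_space set \<Rightarrow> 'a set \<Rightarrow> bool" where
  "rcc8_rel DC s t = (s \<inter> t = {})"
| "rcc8_rel EC s t = (interior s \<inter> interior t = {} \<and> s \<inter> t \<noteq> {})"
| "rcc8_rel PO s t = (interior s \<inter> interior t \<noteq> {} \<and> \<not> s \<subseteq> t \<and> \<not> t \<subseteq> s)"
| "rcc8_rel EQ s t = (s = t)"
| "rcc8_rel TPP s t = (s \<subseteq> t \<and> \<not> s \<subseteq> interior t \<and> s \<noteq> t)"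
| "rcc8_rel NTPP s t = (s \<subseteq> interior t \<and> s \<noteq> t)"
| "rcc8_rel TPPI s t = (t \<subseteq> s \<and> \<not> t \<subseteq> interior s \<and> t \<noteq> s)"
| "rcc8_rel NTPPI s t = (t \<subseteq> interior s \<and> t \<noteq> s)"

datatype fm = PVar nat | Neg fm | Conj fm fm | Box rcc8 fm

fun sat :: "'a::topological_space set set \<Rightarrow> (nat \<Rightarrow> 'a set set) \<Rightarrow> 'a set \<Rightarrow> fm \<Rightarrow> bool" where
  "sat W V s (PVar k) = (s \<in> V k)"
| "sat W V s (Neg \<phi>) = (\<not> sat W V s \<phi>)"
| "sat W V s (Conj \<phi> \<psi>) = (sat W V s \<phi> \<and> sat W V s \<psi>)"
| "sat W V s (Box r \<phi>) = (\<forall>t\<in>W. rcc8_rel r s t \<longrightarrow> sat W V t \<phi>)"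

text \<open>Logic of all substructures (non-empty subsets W of the domain) of the
  structure of rectangles: formulas true at all points of all models on such W.\<close>
definition logic_S_rect :: "'n::finite itself \<Rightarrow> fm set" where
  "logic_S_rect _ = {\<phi>. \<forall>W :: (real ^ 'n) set set. W \<noteq> {} \<longrightarrow> W \<subseteq> rects \<longrightarrow>
       (\<forall>V. \<forall>s\<in>W. sat W V s \<phi>)}"

fun code_rel :: "rcc8 \<Rightarrow> nat" where
  "code_rel DC = 0" | "code_rel EC = 1" | "code_rel PO = 2" | "code_rel EQ = 3"
| "code_rel TPP = 4" | "code_rel NTPP = 5" | "code_rel TPPI = 6" | "code_rel NTPPI = 7"

fun code_fm :: "fm \<Rightarrow> nat" where
  "code_fm (PVar k) = prod_encode (0, k)"
| "code_fm (Neg \<phi>) = prod_encode (1, code_fm \<phi>)"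
| "code_fm (Conj \<phi> \<psi>) = prod_encode (2, prod_encode (code_fm \<phi>, code_fm \<psi>))"
| "code_fm (Box r \<phi>) = prod_encode (3 + code_rel r, code_fm \<phi>)"

datatype recf = Zero | Succ | Proj nat | Comp recf "recf list" | Prec recf recf | Mn recf

inductive eval :: "recf \<Rightarrow> nat list \<Rightarrow> nat \<Rightarrow> bool" where
  "eval Zero xs 0"
| "eval Succ (x # xs) (Suc x)"
| "i < length xs \<Longrightarrow> eval (Proj i) xs (xs ! i)"
| "list_all2 (\<lambda>g y. eval g xs y) gs ys \<Longrightarrow> eval f ys z \<Longrightarrow> eval (Comp f gs) xs z"
| "eval f xs z \<Longrightarrow> eval (Prec f g) (0 # xs) z"
| "eval (Prec f g) (n # xs) r \<Longrightarrow> eval g (n # r # xs) z \<Longrightarrow> eval (Prec f g) (Suc n # xs) z"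
| "eval f (n # xs) 0 \<Longrightarrow> (\<forall>m<n. \<exists>k. eval f (m # xs) (Suc k)) \<Longrightarrow> eval (Mn f) xs n"

definition re_set :: "nat set \<Rightarrow> bool" where
  "re_set A \<longleftrightarrow> (\<exists>f. \<forall>x. x \<in> A \<longleftrightarrow> (\<exists>y. eval f [x] y))"

definition re_fmset :: "fm set \<Rightarrow> bool" where
  "re_fmset S \<longleftrightarrow> re_set (code_fm ` S)"

end

theory Submission
  imports Defs
begin

text \<open>A formula fails in a substructure of boxes iff it has a countermodel consisting of countably many
boxes labelled, Hintikka-style, with the subformulas they satisfy, in which every false box formula of a
box is refuted at a witness box. Whether boxes stand in an RCC8 relation depends only on the relative
order of their coordinates, so an approximation of depth N (N boxes together with their witnesses) may
be assumed to have natural-number coordinates below an explicit bound, and its existence is decidable.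
Conversely, by Koenig's lemma approximations of all depths fit together into one countable structure,
whose coordinate orders embed into the reals; this yields a countermodel of boxes in R^n. Hence a
formula is valid iff for some N it has no approximation of depth N, a recursively enumerable
condition.\<close>

section \<open>Total computable functions and decidable predicates\<close>

definition computable :: "nat \<Rightarrow> (nat list \<Rightarrow> nat) \<Rightarrow> bool" where
  "computable k F \<longleftrightarrow> (\<exists>f. \<forall>xs. length xs = k \<longrightarrow> eval f xs (F xs))"

definition decidable :: "nat \<Rightarrow> (nat list \<Rightarrow> bool) \<Rightarrow> bool" where
  "decidable k P \<longleftrightarrow> computable k (\<lambda>xs. of_bool (P xs))"

inductive_cases eval_ZeroE: "eval Zero xs z"
inductive_cases eval_SuccE: "eval Succ xs z"
inductive_cases eval_ProjE: "eval (Proj i) xs z"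
inductive_cases eval_CompE: "eval (Comp f gs) xs z"
inductive_cases eval_PrecE: "eval (Prec f g) xs z"
inductive_cases eval_MnE: "eval (Mn f) xs z"

lemma eval_deterministic: "eval f xs z \<Longrightarrow> eval f xs z' \<Longrightarrow> z' = z"
proof (induction arbitrary: z' rule: eval.induct)
  case (4 xs gs ys f z)
  from \<open>eval (Comp f gs) xs z'\<close> obtain ys' where
    ys': "list_all2 (\<lambda>g y. eval g xs y) gs ys'" and "eval f ys' z'"
    by (rule eval_CompE)
  from "4.IH"(1) ys' have "ys' = ys"
    by (induction arbitrary: ys' rule: list_all2_induct) (auto simp: list_all2_Cons1)
  with \<open>eval f ys' z'\<close> "4.IH"(2) show ?case by blast
next
  case (6 f g n xs r z)
  from \<open>eval (Prec f g) (Suc n # xs) z'\<close> obtain r' where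
    "eval (Prec f g) (n # xs) r'" "eval g (n # r' # xs) z'"
    by (rule eval_PrecE) auto
  with "6.IH" show ?case by blast
next
  case (7 f n xs)
  from \<open>eval (Mn f) xs z'\<close> have z': "eval f (z' # xs) 0" "\<forall>m<z'. \<exists>k. eval f (m # xs) (Suc k)"
    by (blast elim: eval_MnE)+
  show ?case
  proof (rule linorder_cases[of z' n])
    assume "z' < n"
    with "7.IH" z'(1) show ?thesis by fastforce
  next
    assume "n < z'"
    with "7.IH"(1) z'(2) show ?thesis by fastforce
  qed
qed (blast elim: eval_ZeroE eval_SuccE eval_ProjE eval_PrecE)+

lemma computable_cong:
  "computable k F \<Longrightarrow> (\<And>xs. length xs = k \<Longrightarrow> F xs = G xs) \<Longrightarrow> computable k G"
  unfolding computable_def by metis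

lemma decidable_cong:
  "decidable k P \<Longrightarrow> (\<And>xs. length xs = k \<Longrightarrow> P xs \<longleftrightarrow> Q xs) \<Longrightarrow> decidable k Q"
  unfolding decidable_def by (erule computable_cong) simp

fun const_recf :: "nat \<Rightarrow> recf" where
  "const_recf 0 = Zero"
| "const_recf (Suc c) = Comp Succ [const_recf c]"

lemma eval_const_recf: "eval (const_recf c) xs c"
  by (induction c) (auto intro: eval.intros)

lemma computable_const: "computable k (\<lambda>xs. c)"
  unfolding computable_def using eval_const_recf by blast

lemma computable_nth: "i < k \<Longrightarrow> computable k (\<lambda>xs. xs ! i)"
  unfolding computable_def by (metis eval.intros(3))

lemma computable_comp:
  assumes "computable (length Fs) G" "\<forall>F\<in>set Fs. computable k F"
  shows "computable k (\<lambda>xs. G (map (\<lambda>F. F xs) Fs))"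
proof -
  obtain g where g: "\<forall>ys. length ys = length Fs \<longrightarrow> eval g ys (G ys)"
    using assms(1) unfolding computable_def by blast
  obtain fs where fs: "list_all2 (\<lambda>F f. \<forall>xs. length xs = k \<longrightarrow> eval f xs (F xs)) Fs fs"
    using assms(2) unfolding computable_def
    by (induction Fs) (auto simp: list_all2_Cons1)
  have "eval (Comp g fs) xs (G (map (\<lambda>F. F xs) Fs))" if "length xs = k" for xs
  proof (rule eval.intros(4))
    show "list_all2 (\<lambda>g y. eval g xs y) fs (map (\<lambda>F. F xs) Fs)"
      using fs that by (induction rule: list_all2_induct) auto
  qed (use g in simp)
  then show ?thesis unfolding computable_def by blast
qed

lemma computable_rec_nat:
  assumes "computable k G" "computable (Suc (Suc k)) H"
  shows "computable (Suc k) (\<lambda>xs. rec_nat (G (tl xs)) (\<lambda>n r. H (n # r # tl xs)) (hd xs))"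
proof -
  obtain g where g: "\<forall>xs. length xs = k \<longrightarrow> eval g xs (G xs)"
    using assms(1) unfolding computable_def by blast
  obtain h where h: "\<forall>xs. length xs = Suc (Suc k) \<longrightarrow> eval h xs (H xs)"
    using assms(2) unfolding computable_def by blast
  have prec: "eval (Prec g h) (n # ys) (rec_nat (G ys) (\<lambda>n r. H (n # r # ys)) n)" if "length ys = k" for n ys
    using that g h by (induction n) (auto intro: eval.intros)
  then show ?thesis
    unfolding computable_def
  proof (intro exI allI impI)
    fix xs :: "nat list" assume "length xs = Suc k"
    then obtain n ys where "xs = n # ys" "length ys = k" by (cases xs) auto
    with prec show "eval (Prec g h) xs (rec_nat (G (tl xs)) (\<lambda>n r. H (n # r # tl xs)) (hd xs))"
      by simp
  qed
qed

lemma computable_rec_nat2: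
  assumes "computable 1 (\<lambda>ys. G (ys ! 0))" "computable 3 (\<lambda>ys. H (ys ! 0) (ys ! 1) (ys ! 2))"
  shows "computable 2 (\<lambda>xs. rec_nat (G (xs ! 1)) (\<lambda>n r. H n r (xs ! 1)) (xs ! 0))"
proof -
  have "computable (Suc 1) (\<lambda>xs. rec_nat (G (tl xs ! 0))
      (\<lambda>n r. H ((n # r # tl xs) ! 0) ((n # r # tl xs) ! 1) ((n # r # tl xs) ! 2)) (hd xs))"
    using assms by (intro computable_rec_nat[where G="\<lambda>ys. G (ys ! 0)"]) (simp_all add: numeral_3_eq_3)
  then show ?thesis
    unfolding Suc_1 by (rule computable_cong) (auto simp: length_Suc_conv numeral_2_eq_2)
qed

lemma computable_binop:
  assumes "computable 2 (\<lambda>xs. f (xs ! 0) (xs ! 1))" "computable k F" "computable k G"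
  shows "computable k (\<lambda>xs. f (F xs) (G xs))"
  using computable_comp[of "[F, G]" "\<lambda>xs. f (xs ! 0) (xs ! 1)" k] assms by (simp add: numeral_2_eq_2)

lemma computable_Suc:
  assumes "computable k F"
  shows "computable k (\<lambda>xs. Suc (F xs))"
proof -
  have "eval Succ xs (Suc (xs ! 0))" if "length xs = 1" for xs
    using that by (cases xs) (auto intro: eval.intros)
  then have "computable 1 (\<lambda>xs. Suc (xs ! 0))"
    unfolding computable_def by blast
  with assms show ?thesis
    using computable_comp[of "[F]" "\<lambda>xs. Suc (xs ! 0)" k] by simp
qed

lemma computable_add:
  assumes "computable k F" "computable k G"
  shows "computable k (\<lambda>xs. F xs + G xs)"
proof -
  have "rec_nat b (\<lambda>n r. Suc r) a = a + b" for a b :: nat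
    by (induction a) auto
  moreover have "computable 2 (\<lambda>xs. rec_nat (xs ! 1) (\<lambda>n r. Suc r) (xs ! 0))"
    by (rule computable_rec_nat2[where G="\<lambda>b. b" and H="\<lambda>n r b. Suc r"])
      (intro computable_Suc computable_nth; simp)+
  ultimately have "computable 2 (\<lambda>xs. xs ! 0 + xs ! 1)"
    by simp
  then show ?thesis
    using assms by (rule computable_binop)
qed

lemma computable_diff:
  assumes "computable k F" "computable k G"
  shows "computable k (\<lambda>xs. F xs - G xs)"
proof -
  have "rec_nat 0 (\<lambda>n r. n) a = a - 1" for a :: nat
    by (cases a) auto
  moreover have "computable (Suc 0) (\<lambda>xs. rec_nat 0 (\<lambda>n r. n) (hd xs))"
    using computable_rec_nat[of 0 "\<lambda>_. 0" "\<lambda>ys. ys ! 0"] by (simp add: computable_nth computable_const)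
  ultimately have "computable (Suc 0) (\<lambda>xs. hd xs - 1)"
    by simp
  then have pred: "computable 3 (\<lambda>ys. ys ! 1 - 1)"
    using computable_comp[of "[\<lambda>ys. ys ! 1]" "\<lambda>xs. hd xs - 1" 3] by (simp add: computable_nth)
  have "rec_nat b (\<lambda>n r. r - 1) a = b - a" for a b :: nat
    by (induction a) auto
  moreover have "computable 2 (\<lambda>xs. rec_nat (xs ! 1) (\<lambda>n r. r - 1) (xs ! 0))"
    by (rule computable_rec_nat2[where G="\<lambda>b. b" and H="\<lambda>n r b. r - 1"]) (simp_all add: pred[simplified] computable_nth)
  ultimately have "computable 2 (\<lambda>xs. xs ! 1 - xs ! 0)"
    by simp
  then show ?thesis
    using computable_binop[of "\<lambda>a b. b - a" k G F] assms by simp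
qed

lemma computable_mult:
  assumes "computable k F" "computable k G"
  shows "computable k (\<lambda>xs. F xs * G xs)"
proof -
  have "rec_nat 0 (\<lambda>n r. r + b) a = a * b" for a b :: nat
    by (induction a) auto
  moreover have "computable 2 (\<lambda>xs. rec_nat 0 (\<lambda>n r. r + xs ! 1) (xs ! 0))"
    by (rule computable_rec_nat2[where G="\<lambda>b. 0" and H="\<lambda>n r b. r + b"])
      (intro computable_const computable_add computable_nth; simp)+
  ultimately have "computable 2 (\<lambda>xs. xs ! 0 * xs ! 1)"
    by simp
  then show ?thesis
    using assms by (rule computable_binop)
qed

lemma computable_power:
  assumes "computable k F" "computable k G"
  shows "computable k (\<lambda>xs. F xs ^ G xs)"
proof -
  have "rec_nat 1 (\<lambda>n r. r * b) a = b ^ a" for a b :: nat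
    by (induction a) auto
  moreover have "computable 2 (\<lambda>xs. rec_nat 1 (\<lambda>n r. r * xs ! 1) (xs ! 0))"
    by (rule computable_rec_nat2[where G="\<lambda>b. 1" and H="\<lambda>n r b. r * b"])
      (intro computable_const computable_mult computable_nth; simp)+
  ultimately have "computable 2 (\<lambda>xs. xs ! 1 ^ xs ! 0)"
    by simp
  then show ?thesis
    using computable_binop[of "\<lambda>a b. b ^ a" k G F] assms by simp
qed

lemma computable_reindex:
  assumes "computable (length is) F" "\<forall>i\<in>set is. i < k"
  shows "computable k (\<lambda>xs. F (map ((!) xs) is))"
  using computable_comp[of "map (\<lambda>i xs. xs ! i) is" F k] assms by (auto simp: comp_def intro: computable_nth)

lemma computable_tl:
  assumes "computable k F"
  shows "computable (Suc k) (\<lambda>xs. F (tl xs))"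
proof (rule computable_cong)
  show "computable (Suc k) (\<lambda>xs. F (map ((!) xs) (map Suc [0..<k])))"
    using assms by (intro computable_reindex) auto
  show "F (map ((!) xs) (map Suc [0..<k])) = F (tl xs)" if "length xs = Suc k" for xs
    using that by (auto simp: nth_tl intro!: arg_cong[where f=F] nth_equalityI)
qed

lemma computable_hd: "0 < k \<Longrightarrow> computable k (\<lambda>xs. hd xs)"
  by (rule computable_cong[OF computable_nth[of 0]]) (auto simp: hd_conv_nth)

lemma computable_Cons:
  assumes "computable (Suc k) F" "computable k B"
  shows "computable k (\<lambda>xs. F (B xs # xs))"
proof -
  have "computable k (\<lambda>xs. F (map (\<lambda>G. G xs) (B # map (\<lambda>i xs. xs ! i) [0..<k])))"
    using assms by (intro computable_comp) (auto intro: computable_nth)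
  moreover have "map (\<lambda>i. xs ! i) [0..<k] = xs" if "length xs = k" for xs :: "nat list"
    using that map_nth[of xs] by (simp add: comp_def)
  ultimately show ?thesis by (elim computable_cong) (simp add: comp_def)
qed

lemma computable_of_bool: "decidable k P \<Longrightarrow> computable k (\<lambda>xs. of_bool (P xs))"
  unfolding decidable_def .

lemma decidable_le:
  assumes "computable k F" "computable k G"
  shows "decidable k (\<lambda>xs. F xs \<le> G xs)"
proof -
  have "computable k (\<lambda>xs. 1 - (F xs - G xs))"
    using assms by (intro computable_diff computable_const)
  then show ?thesis unfolding decidable_def by (rule computable_cong) simp
qed

lemma decidable_not:
  assumes "decidable k P"
  shows "decidable k (\<lambda>xs. \<not> P xs)"
proof -
  have "computable k (\<lambda>xs. 1 - of_bool (P xs))"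
    using assms unfolding decidable_def by (intro computable_diff computable_const)
  then show ?thesis unfolding decidable_def by (rule computable_cong) simp
qed

lemma decidable_conj:
  assumes "decidable k P" "decidable k Q"
  shows "decidable k (\<lambda>xs. P xs \<and> Q xs)"
proof -
  have "computable k (\<lambda>xs. of_bool (P xs) * of_bool (Q xs))"
    using assms unfolding decidable_def by (intro computable_mult)
  then show ?thesis unfolding decidable_def by (rule computable_cong) simp
qed

lemma decidable_disj:
  assumes "decidable k P" "decidable k Q"
  shows "decidable k (\<lambda>xs. P xs \<or> Q xs)"
proof -
  have "decidable k (\<lambda>xs. \<not> (\<not> P xs \<and> \<not> Q xs))"
    using assms by (intro decidable_not decidable_conj)
  then show ?thesis by simp
qed

lemma decidable_imp:
  assumes "decidable k P" "decidable k Q"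
  shows "decidable k (\<lambda>xs. P xs \<longrightarrow> Q xs)"
proof -
  have "decidable k (\<lambda>xs. \<not> P xs \<or> Q xs)"
    using assms by (intro decidable_not decidable_disj)
  then show ?thesis by simp
qed

lemma decidable_iff:
  assumes "decidable k P" "decidable k Q"
  shows "decidable k (\<lambda>xs. P xs \<longleftrightarrow> Q xs)"
proof -
  have "decidable k (\<lambda>xs. (P xs \<longrightarrow> Q xs) \<and> (Q xs \<longrightarrow> P xs))"
    using assms by (intro decidable_imp decidable_conj)
  then show ?thesis by (rule decidable_cong) blast
qed

lemma decidable_less:
  assumes "computable k F" "computable k G"
  shows "decidable k (\<lambda>xs. F xs < G xs)"
proof -
  have "decidable k (\<lambda>xs. Suc (F xs) \<le> G xs)"
    using assms by (intro decidable_le computable_Suc)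
  then show ?thesis by (simp add: Suc_le_eq)
qed

lemma decidable_eq:
  assumes "computable k F" "computable k G"
  shows "decidable k (\<lambda>xs. F xs = G xs)"
proof -
  have "decidable k (\<lambda>xs. F xs \<le> G xs \<and> G xs \<le> F xs)"
    using assms by (intro decidable_le decidable_conj)
  then show ?thesis by (rule decidable_cong) auto
qed

lemma computable_if:
  assumes "decidable k P" "computable k F" "computable k G"
  shows "computable k (\<lambda>xs. if P xs then F xs else G xs)"
proof -
  have "computable k (\<lambda>xs. of_bool (P xs) * F xs + (1 - of_bool (P xs)) * G xs)"
    using assms unfolding decidable_def by (intro computable_add computable_mult computable_diff computable_const)
  then show ?thesis by (rule computable_cong) simp
qed

lemma Suc_div_eq:
  "0 < (b::nat) \<Longrightarrow> Suc a div b = (if (a div b + 1) * b \<le> Suc a then a div b + 1 else a div b)"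
  by (metis Nat.add_0_right One_nat_def Suc_n_not_le_n add_Suc_right div_Suc
    less_eq_div_iff_mult_less_eq mult.commute times_div_less_eq_dividend)

lemma computable_div:
  assumes "computable k F" "computable k G"
  shows "computable k (\<lambda>xs. F xs div G xs)"
proof -
  have "rec_nat 0 (\<lambda>n r. if 0 < b \<and> (r + 1) * b \<le> Suc n then r + 1 else r) a = a div b" for a b :: nat
    by (cases "b = 0"; induction a) (auto simp: Suc_div_eq)
  moreover have "computable 2 (\<lambda>xs. rec_nat 0 (\<lambda>n r. if 0 < xs ! 1 \<and> (r + 1) * xs ! 1 \<le> Suc n then r + 1 else r) (xs ! 0))"
    by (rule computable_rec_nat2[where G="\<lambda>b. 0" and H="\<lambda>n r b. if 0 < b \<and> (r + 1) * b \<le> Suc n then r + 1 else r"])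
      (intro computable_if decidable_conj decidable_less decidable_le computable_mult computable_add
        computable_Suc computable_const computable_nth; simp)+
  ultimately have "computable 2 (\<lambda>xs. xs ! 0 div xs ! 1)"
    by (elim computable_cong) (simp cong: if_cong)
  then show ?thesis
    using assms by (rule computable_binop)
qed

lemma computable_mod:
  assumes "computable k F" "computable k G"
  shows "computable k (\<lambda>xs. F xs mod G xs)"
proof -
  have "computable k (\<lambda>xs. F xs - G xs * (F xs div G xs))"
    using assms by (intro computable_diff computable_mult computable_div)
  then show ?thesis by (rule computable_cong) (simp add: minus_mult_div_eq_mod)
qed

text \<open>Bounded sums and quantifiers pass the bound variable as an extra first argument; their bodies are
written with \<open>tl ys\<close> and \<open>hd ys\<close> so that higher-order unification can match them. Nested binders
then leave projections \<open>hd (tl (\<dots> ys))\<close> and \<open>tl (\<dots> ys) ! i\<close>, which computable_hd and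
computable_tl resolve.\<close>

lemma computable_sum_less:
  assumes "computable k B" and F: "computable (Suc k) (\<lambda>ys. F (tl ys) (hd ys))"
  shows "computable k (\<lambda>xs. \<Sum>y<B xs. F xs y)"
proof -
  let ?is = "0 # map (\<lambda>i. i + 2) [0..<k]"
  have "map ((!) zs) ?is = zs ! 0 # tl (tl zs)" if "length zs = Suc (Suc k)" for zs :: "nat list"
    using that by (auto simp: nth_tl intro!: nth_equalityI)
  moreover have "computable (Suc (Suc k)) (\<lambda>zs. F (tl (map ((!) zs) ?is)) (hd (map ((!) zs) ?is)))"
    using F by (intro computable_reindex) auto
  ultimately have "computable (Suc (Suc k)) (\<lambda>zs. F (tl (tl zs)) (zs ! 0))"
    by (elim computable_cong) simp
  then have "computable (Suc k) (\<lambda>xs. rec_nat 0 (\<lambda>n r. (n # r # tl xs) ! 1 + F (tl xs) n) (hd xs))"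
    using computable_rec_nat[of k "\<lambda>_. 0" "\<lambda>zs. zs ! 1 + F (tl (tl zs)) (zs ! 0)"]
    by (simp add: computable_const computable_add computable_nth)
  moreover have "rec_nat 0 (\<lambda>n r. r + G n) m = (\<Sum>y<m. G y)" for G :: "nat \<Rightarrow> nat" and m
    by (induction m) auto
  ultimately have "computable (Suc k) (\<lambda>xs. \<Sum>y<hd xs. F (tl xs) y)"
    by simp
  from computable_Cons[OF this assms(1)] show ?thesis
    by simp
qed

lemma decidable_all_less:
  assumes "computable k B" "decidable (Suc k) (\<lambda>ys. P (tl ys) (hd ys))"
  shows "decidable k (\<lambda>xs. \<forall>y<B xs. P xs y)"
proof -
  have "computable (Suc k) (\<lambda>ys. of_bool (\<not> P (tl ys) (hd ys)))"
    using decidable_not[OF assms(2)] unfolding decidable_def .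
  then have "decidable k (\<lambda>xs. (\<Sum>y<B xs. of_bool (\<not> P xs y)) = (0::nat))"
    using assms(1) by (intro decidable_eq computable_sum_less computable_const)
  then show ?thesis
    by (rule decidable_cong) (simp only: sum_eq_0_iff[OF finite_lessThan], auto)
qed

lemma decidable_ex_less:
  assumes "computable k B" "decidable (Suc k) (\<lambda>ys. P (tl ys) (hd ys))"
  shows "decidable k (\<lambda>xs. \<exists>y<B xs. P xs y)"
proof -
  have "decidable k (\<lambda>xs. \<not> (\<forall>y<B xs. \<not> P xs y))"
    using assms by (intro decidable_not decidable_all_less)
  then show ?thesis by simp
qed

lemma decidable_all_le:
  assumes "computable k B" "decidable (Suc k) (\<lambda>ys. P (tl ys) (hd ys))"
  shows "decidable k (\<lambda>xs. \<forall>y\<le>B xs. P xs y)"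
proof -
  have "decidable k (\<lambda>xs. \<forall>y<Suc (B xs). P xs y)"
    using assms by (intro decidable_all_less computable_Suc)
  then show ?thesis by (simp add: less_Suc_eq_le)
qed

lemma decidable_ex_le:
  assumes "computable k B" "decidable (Suc k) (\<lambda>ys. P (tl ys) (hd ys))"
  shows "decidable k (\<lambda>xs. \<exists>y\<le>B xs. P xs y)"
proof -
  have "decidable k (\<lambda>xs. \<exists>y<Suc (B xs). P xs y)"
    using assms by (intro decidable_ex_less computable_Suc)
  then show ?thesis by (simp add: less_Suc_eq_le)
qed

lemma computable_prod_encode:
  assumes "computable k F" "computable k G"
  shows "computable k (\<lambda>xs. prod_encode (F xs, G xs))"
  unfolding prod_encode_def triangle_def
  using assms by (simp, intro computable_add computable_div computable_mult computable_Suc computable_const)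

lemma sum_of_bool_eq_bound:
  assumes "n \<le> c" "\<And>y. P y \<longleftrightarrow> y < n"
  shows "(\<Sum>y<c. of_bool (P y)) = (n::nat)"
proof -
  have "{..<c} \<inter> {y. y < n} = {..<n}"
    using assms(1) by auto
  then show ?thesis by (simp add: assms(2) of_bool_def sum.If_cases)
qed

lemma prod_decode_eq_sums:
  "fst (prod_decode c) = (\<Sum>y<c. of_bool (\<exists>t\<le>c. \<exists>a\<le>c. c = prod_encode (t, a) \<and> y < t))"
  "snd (prod_decode c) = (\<Sum>y<c. of_bool (\<exists>t\<le>c. \<exists>a\<le>c. c = prod_encode (t, a) \<and> y < a))"
proof -
  obtain t a where c: "c = prod_encode (t, a)"
    by (metis prod_decode_inverse surj_pair)
  then have "t \<le> c" "a \<le> c"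
    by (simp_all add: le_prod_encode_1 le_prod_encode_2)
  have "(\<Sum>y<c. of_bool (\<exists>t'\<le>c. \<exists>a'\<le>c. c = prod_encode (t', a') \<and> y < t')) = t"
    "(\<Sum>y<c. of_bool (\<exists>t'\<le>c. \<exists>a'\<le>c. c = prod_encode (t', a') \<and> y < a')) = a"
    by (rule sum_of_bool_eq_bound; use c \<open>t \<le> c\<close> \<open>a \<le> c\<close> in \<open>auto simp: prod_encode_eq\<close>)+
  with c show "fst (prod_decode c) = (\<Sum>y<c. of_bool (\<exists>t\<le>c. \<exists>a\<le>c. c = prod_encode (t, a) \<and> y < t))"
    "snd (prod_decode c) = (\<Sum>y<c. of_bool (\<exists>t\<le>c. \<exists>a\<le>c. c = prod_encode (t, a) \<and> y < a))"
    by simp_all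
qed

lemma computable_prod_decode:
  assumes "computable k F"
  shows computable_fst_prod_decode: "computable k (\<lambda>xs. fst (prod_decode (F xs)))"
    and computable_snd_prod_decode: "computable k (\<lambda>xs. snd (prod_decode (F xs)))"
  unfolding prod_decode_eq_sums using assms
  by (intro computable_sum_less computable_of_bool decidable_ex_le decidable_conj decidable_eq decidable_less
      computable_prod_encode computable_tl computable_hd computable_nth; simp)+

lemmas computable_intros = computable_const computable_nth computable_hd computable_tl
  computable_Suc computable_add computable_diff computable_mult computable_power
  computable_div computable_mod computable_if computable_prod_encode computable_sum_less computable_of_bool
  decidable_not decidable_conj decidable_disj decidable_imp decidable_iff
  decidable_le decidable_less decidable_eq
  decidable_all_less decidable_ex_less decidable_all_le decidable_ex_le
  computable_fst_prod_decode computable_snd_prod_decode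

lemma re_set_ex_decidable:
  assumes "decidable 2 (\<lambda>xs. P (xs ! 0) (xs ! 1))"
  shows "re_set {x. \<exists>n. P n x}"
proof -
  obtain f where f2: "\<forall>xs. length xs = 2 \<longrightarrow> eval f xs (of_bool (\<not> P (xs ! 0) (xs ! 1)))"
    using decidable_not[OF assms] unfolding decidable_def computable_def by blast
  have f: "eval f [n, x] (of_bool (\<not> P n x))" for n x
    using f2[rule_format, of "[n, x]"] by (simp add: numeral_2_eq_2)
  have "(\<exists>n. P n x) \<longleftrightarrow> (\<exists>y. eval (Mn f) [x] y)" for x
  proof
    assume "\<exists>n. P n x"
    then have "P (LEAST n. P n x) x"
      by (rule LeastI_ex)
    moreover have "\<not> P m x" if "m < (LEAST n. P n x)" for m
      using that by (rule not_less_Least)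
    ultimately have "eval (Mn f) [x] (LEAST n. P n x)"
      using f by (intro eval.intros(7)) (metis of_bool_eq(1), metis One_nat_def of_bool_eq(2))
    then show "\<exists>y. eval (Mn f) [x] y" ..
  next
    assume "\<exists>y. eval (Mn f) [x] y"
    then obtain y where "eval f [y, x] 0"
      by (auto elim: eval_MnE)
    with eval_deterministic[OF f] show "\<exists>n. P n x"
      by (metis of_bool_eq_0_iff)
  qed
  then show ?thesis
    unfolding re_set_def by auto
qed

section \<open>RCC8 relations between boxes in coordinates\<close>

text \<open>In \<open>rcc8_coord d R a b c e\<close> the two boxes have lower and upper corners \<open>a, b\<close> and \<open>c, e\<close>;
only coordinates below \<open>d\<close> are compared.\<close>

fun rcc8_coord :: "nat \<Rightarrow> rcc8 \<Rightarrow> (nat \<Rightarrow> 'a::linorder) \<Rightarrow> (nat \<Rightarrow> 'a) \<Rightarrow> (nat \<Rightarrow> 'a) \<Rightarrow> (nat \<Rightarrow> 'a) \<Rightarrow> bool" where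
  "rcc8_coord d DC a b c e \<longleftrightarrow> (\<exists>j<d. b j < c j \<or> e j < a j)"
| "rcc8_coord d EC a b c e \<longleftrightarrow> (\<exists>j<d. b j \<le> c j \<or> e j \<le> a j) \<and> \<not> (\<exists>j<d. b j < c j \<or> e j < a j)"
| "rcc8_coord d PO a b c e \<longleftrightarrow> \<not> (\<exists>j<d. b j \<le> c j \<or> e j \<le> a j) \<and>
     \<not> (\<forall>j<d. c j \<le> a j \<and> b j \<le> e j) \<and> \<not> (\<forall>j<d. a j \<le> c j \<and> e j \<le> b j)"
| "rcc8_coord d EQ a b c e \<longleftrightarrow> (\<forall>j<d. a j = c j \<and> b j = e j)"
| "rcc8_coord d TPP a b c e \<longleftrightarrow> (\<forall>j<d. c j \<le> a j \<and> b j \<le> e j) \<and>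
     \<not> (\<forall>j<d. c j < a j \<and> b j < e j) \<and> \<not> (\<forall>j<d. a j = c j \<and> b j = e j)"
| "rcc8_coord d NTPP a b c e \<longleftrightarrow> (\<forall>j<d. c j < a j \<and> b j < e j) \<and> \<not> (\<forall>j<d. a j = c j \<and> b j = e j)"
| "rcc8_coord d TPPI a b c e \<longleftrightarrow> (\<forall>j<d. a j \<le> c j \<and> e j \<le> b j) \<and>
     \<not> (\<forall>j<d. a j < c j \<and> e j < b j) \<and> \<not> (\<forall>j<d. a j = c j \<and> b j = e j)"
| "rcc8_coord d NTPPI a b c e \<longleftrightarrow> (\<forall>j<d. a j < c j \<and> e j < b j) \<and> \<not> (\<forall>j<d. a j = c j \<and> b j = e j)"

declare rcc8_coord.simps [simp del]

lemma rcc8_coord_cong: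
  assumes "\<And>j. j < d \<Longrightarrow> a j = a' j \<and> b j = b' j \<and> c j = c' j \<and> e j = e' j"
  shows "rcc8_coord d R a b c e \<longleftrightarrow> rcc8_coord d R a' b' c' e'"
proof -
  have "a j = a' j" "b j = b' j" "c j = c' j" "e j = e' j" if "j < d" for j
    using assms that by simp_all
  then show ?thesis by (cases R) (simp_all add: rcc8_coord.simps cong: conj_cong)
qed

lemma all_rcc8: "(\<forall>R. P R) \<longleftrightarrow> P DC \<and> P EC \<and> P PO \<and> P EQ \<and> P TPP \<and> P NTPP \<and> P TPPI \<and> P NTPPI"
  by (metis rcc8.exhaust)

lemma bij_betw_all_iff: "bij_betw h {..<d} UNIV \<Longrightarrow> (\<forall>k. P k) \<longleftrightarrow> (\<forall>j<d. P (h j))"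
  by (metis bij_betw_iff_bijections lessThan_iff UNIV_I)

lemma bij_betw_ex_iff: "bij_betw h {..<d} UNIV \<Longrightarrow> (\<exists>k. P k) \<longleftrightarrow> (\<exists>j<d. P (h j))"
  by (metis bij_betw_iff_bijections lessThan_iff UNIV_I)

lemma rcc8_rel_cbox_iff:
  fixes a b c e :: "real ^ 'n"
  assumes h: "bij_betw h {..<d} UNIV" and "\<forall>k. a $ k < b $ k" "\<forall>k. c $ k < e $ k"
  shows "rcc8_rel R (cbox a b) (cbox c e) \<longleftrightarrow>
    rcc8_coord d R (\<lambda>j. a $ h j) (\<lambda>j. b $ h j) (\<lambda>j. c $ h j) (\<lambda>j. e $ h j)"
proof -
  have le: "\<forall>k. a $ k \<le> b $ k" "\<forall>k. c $ k \<le> e $ k"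
    using assms(2,3) by (simp_all add: less_imp_le)
  have "cbox a b \<noteq> {}" "cbox c e \<noteq> {}"
    using le by (simp_all add: interval_ne_empty_cart)
  then have eq: "cbox a b = cbox c e \<longleftrightarrow> (\<forall>k. a $ k = c $ k \<and> b $ k = e $ k)"
    by (auto simp: eq_cbox vec_eq_iff)
  then have eq': "cbox c e = cbox a b \<longleftrightarrow> (\<forall>k. a $ k = c $ k \<and> b $ k = e $ k)"
    by auto
  note prims = disjoint_interval_cart(1)[of a b c e] disjoint_interval_cart(4)[of a b c e]
    subset_interval_cart(1)[of a b c e] subset_interval_cart(1)[of c e a b]
    subset_interval_cart(2)[of a b c e] subset_interval_cart(2)[of c e a b]
  have nb: "\<not> b $ k < a $ k" "\<not> e $ k < c $ k" "\<not> b $ k \<le> a $ k" "\<not> e $ k \<le> c $ k" for k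
    using assms(2,3) by (meson not_less less_imp_le)+
  note transfer = bij_betw_all_iff[OF h] bij_betw_ex_iff[OF h]
  show ?thesis
    using le by (cases R) (simp_all add: rcc8_coord.simps prims eq eq' nb transfer)
qed

section \<open>Approximations of countermodels\<close>

text \<open>In an approximation of depth \<open>N\<close> for the formula with code \<open>x\<close>, each box \<open>i < N\<close> has, for every
code \<open>c \<le> x\<close>, its own slot \<open>witness x i c\<close> for a witness; \<open>box_count x N\<close> boxes cover all these slots.\<close>

definition box_count :: "nat \<Rightarrow> nat \<Rightarrow> nat" where
  "box_count x N = Suc (N * Suc x)"

definition witness :: "nat \<Rightarrow> nat \<Rightarrow> nat \<Rightarrow> nat" where
  "witness x i c = Suc (i * Suc x + c)"

lemma mult_add_less:
  assumes "a < n" "b < m"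
  shows "a * m + b < n * (m::nat)"
proof -
  have "a * m + b < Suc a * m" using assms(2) by simp
  also have "\<dots> \<le> n * m" using assms(1) by (intro mult_le_mono1) simp
  finally show ?thesis .
qed

lemma mult_add_div_mod:
  assumes "b < (m::nat)"
  shows "(a * m + b) div m = a" "(a * m + b) mod m = b"
  using assms by (simp_all add: div_mult_self2 add.commute[of "a * m"])

lemma witness_less_box_count: "i < N \<Longrightarrow> c \<le> x \<Longrightarrow> witness x i c < box_count x N"
  using mult_add_less[of i N c "Suc x"] unfolding witness_def box_count_def by simp

lemma less_box_count: "i \<le> N \<Longrightarrow> i < box_count x N"
  unfolding box_count_def by (metis le_add1 le_imp_less_Suc mult_Suc_right order_trans)

lemma box_count_mono: "N \<le> M \<Longrightarrow> box_count x N \<le> box_count x M"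
  unfolding box_count_def using mult_le_mono1[of N M "Suc x"] by simp

text \<open>Coordinates are indexed by tokens: token \<open>2 * i\<close> is the lower and token \<open>2 * i + 1\<close> the upper
corner of box \<open>i\<close>.\<close>

abbreviation (input) lower :: "(nat \<Rightarrow> nat \<Rightarrow> 'a) \<Rightarrow> nat \<Rightarrow> nat \<Rightarrow> 'a" where
  "lower v i \<equiv> v (2 * i)"

abbreviation (input) upper :: "(nat \<Rightarrow> nat \<Rightarrow> 'a) \<Rightarrow> nat \<Rightarrow> nat \<Rightarrow> 'a" where
  "upper v i \<equiv> v (Suc (2 * i))"

text \<open>\<open>l i c\<close> states that box \<open>i\<close> satisfies the formula with code \<open>c\<close>. The conditions are those of a
Hintikka set, read off the decoding of every \<open>c \<le> x\<close> (whether or not \<open>c\<close> is a code), except that box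
formulas need to be witnessed only in the first \<open>N\<close> boxes.\<close>

definition approx_countermodel ::
    "nat \<Rightarrow> nat \<Rightarrow> nat \<Rightarrow> (nat \<Rightarrow> nat \<Rightarrow> 'a::linorder) \<Rightarrow> (nat \<Rightarrow> nat \<Rightarrow> bool) \<Rightarrow> bool" where
  "approx_countermodel x N d v l \<longleftrightarrow>
    (\<forall>i<box_count x N. \<forall>j<d. lower v i j < upper v i j) \<and>
    (\<forall>i<box_count x N. \<forall>i'<box_count x N. \<forall>c\<le>x.
       rcc8_coord d EQ (lower v i) (upper v i) (lower v i') (upper v i') \<longrightarrow> l i c = l i' c) \<and>
    (\<forall>i<box_count x N. \<forall>c\<le>x.
       (fst (prod_decode c) = 1 \<longrightarrow> (l i c \<longleftrightarrow> \<not> l i (snd (prod_decode c)))) \<and>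
       (fst (prod_decode c) = 2 \<longrightarrow> (l i c \<longleftrightarrow>
          l i (fst (prod_decode (snd (prod_decode c)))) \<and> l i (snd (prod_decode (snd (prod_decode c))))))) \<and>
    (\<forall>i<box_count x N. \<forall>i'<box_count x N. \<forall>c\<le>x. \<forall>R.
       fst (prod_decode c) = 3 + code_rel R \<and> l i c \<and>
       rcc8_coord d R (lower v i) (upper v i) (lower v i') (upper v i') \<longrightarrow> l i' (snd (prod_decode c))) \<and>
    (\<forall>i<N. \<forall>c\<le>x. \<forall>R. fst (prod_decode c) = 3 + code_rel R \<and> \<not> l i c \<longrightarrow>
       rcc8_coord d R (lower v i) (upper v i) (lower v (witness x i c)) (upper v (witness x i c)) \<and>
       \<not> l (witness x i c) (snd (prod_decode c))) \<and>
    \<not> l 0 x"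

lemma prod_decode_le: "c \<le> x \<Longrightarrow> fst (prod_decode c) \<le> x" "c \<le> x \<Longrightarrow> snd (prod_decode c) \<le> x"
  by (metis le_prod_encode_1 le_prod_encode_2 order_trans prod.collapse prod_decode_inverse)+

lemma approx_countermodel_mono:
  "approx_countermodel x M d v l \<Longrightarrow> N \<le> M \<Longrightarrow> approx_countermodel x N d v l"
  unfolding approx_countermodel_def using box_count_mono[of N M x]
  by (elim conjE, intro conjI) (meson less_le_trans)+

definition same_order_type ::
    "nat \<Rightarrow> nat \<Rightarrow> nat \<Rightarrow> (nat \<Rightarrow> nat \<Rightarrow> 'a::linorder) \<Rightarrow> (nat \<Rightarrow> nat \<Rightarrow> bool) \<Rightarrow>
     (nat \<Rightarrow> nat \<Rightarrow> 'b::linorder) \<Rightarrow> (nat \<Rightarrow> nat \<Rightarrow> bool) \<Rightarrow> bool" where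
  "same_order_type x N d v l v' l' \<longleftrightarrow>
    (\<forall>t<2 * box_count x N. \<forall>t'<2 * box_count x N. \<forall>j<d. v t j \<le> v t' j \<longleftrightarrow> v' t j \<le> v' t' j) \<and>
    (\<forall>i<box_count x N. \<forall>c\<le>x. l i c \<longleftrightarrow> l' i c)"

lemma same_order_type_refl: "same_order_type x N d v l v l"
  unfolding same_order_type_def by blast

lemma same_order_type_sym: "same_order_type x N d v l v' l' \<Longrightarrow> same_order_type x N d v' l' v l"
  unfolding same_order_type_def by metis

lemma same_order_type_trans:
  "same_order_type x N d v l v' l' \<Longrightarrow> same_order_type x N d v' l' v'' l'' \<Longrightarrow> same_order_type x N d v l v'' l''"
  unfolding same_order_type_def by metis

lemma same_order_type_mono: "same_order_type x M d v l v' l' \<Longrightarrow> N \<le> M \<Longrightarrow> same_order_type x N d v l v' l'"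
  unfolding same_order_type_def using box_count_mono[of N M x] by (meson less_le_trans mult_le_mono2)

lemma approx_countermodel_same_order_type:
  fixes v :: "nat \<Rightarrow> nat \<Rightarrow> 'a::linorder" and v' :: "nat \<Rightarrow> nat \<Rightarrow> 'b::linorder"
  assumes "same_order_type x N d v l v' l'"
  shows "approx_countermodel x N d v l \<longleftrightarrow> approx_countermodel x N d v' l'"
proof -
  let ?T = "2 * box_count x N"
  have le: "v t j \<le> v t' j \<longleftrightarrow> v' t j \<le> v' t' j" if "t < ?T" "t' < ?T" "j < d" for t t' j
    using assms that unfolding same_order_type_def by blast
  have less: "v t j < v t' j \<longleftrightarrow> v' t j < v' t' j" if "t < ?T" "t' < ?T" "j < d" for t t' j
    using le[OF that(2,1,3)] by (simp add: not_le[symmetric])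
  have eq: "v t j = v t' j \<longleftrightarrow> v' t j = v' t' j" if "t < ?T" "t' < ?T" "j < d" for t t' j
    using le[OF that] le[OF that(2,1,3)] by (auto simp: order.eq_iff)
  have lab: "l i c \<longleftrightarrow> l' i c" if "i < box_count x N" "c \<le> x" for i c
    using assms that unfolding same_order_type_def by blast
  have rel: "rcc8_coord d R (lower v i) (upper v i) (lower v i') (upper v i') \<longleftrightarrow>
      rcc8_coord d R (lower v' i) (upper v' i) (lower v' i') (upper v' i')"
    if "i < box_count x N" "i' < box_count x N" for R i i'
    using that by (cases R) (simp_all add: rcc8_coord.simps le less eq cong: conj_cong)
  have "0 < box_count x N" "i < N \<Longrightarrow> i < box_count x N" for i
    by (simp_all add: box_count_def less_box_count)
  then show ?thesis
    unfolding approx_countermodel_def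
    by (simp add: less eq lab rel rcc8_coord.simps prod_decode_le witness_less_box_count)
qed

lemma same_order_type_if_eq_on:
  assumes "\<And>t j. t < 2 * box_count x N \<Longrightarrow> j < d \<Longrightarrow> v t j = v' t j"
    and "\<And>i c. i < box_count x N \<Longrightarrow> c \<le> x \<Longrightarrow> l i c = l' i c"
  shows "same_order_type x N d v l v' l'"
  using assms unfolding same_order_type_def by simp

section \<open>Small codes of approximations\<close>

definition coord_rank :: "nat \<Rightarrow> (nat \<Rightarrow> nat \<Rightarrow> 'a::linorder) \<Rightarrow> nat \<Rightarrow> nat \<Rightarrow> nat" where
  "coord_rank T v t j = card {t'. t' < T \<and> v t' j < v t j}"

lemma coord_rank_le_iff:
  assumes "t < T" "t' < T"
  shows "coord_rank T v t j \<le> coord_rank T v t' j \<longleftrightarrow> v t j \<le> v t' j"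
proof
  assume "v t j \<le> v t' j"
  then have "{s. s < T \<and> v s j < v t j} \<subseteq> {s. s < T \<and> v s j < v t' j}"
    by auto
  then show "coord_rank T v t j \<le> coord_rank T v t' j"
    unfolding coord_rank_def by (intro card_mono) auto
next
  assume "coord_rank T v t j \<le> coord_rank T v t' j"
  show "v t j \<le> v t' j"
  proof (rule ccontr)
    assume "\<not> v t j \<le> v t' j"
    then have "v t' j < v t j" by simp
    then have "{s. s < T \<and> v s j < v t' j} \<subseteq> {s. s < T \<and> v s j < v t j}"
      "t' \<in> {s. s < T \<and> v s j < v t j} - {s. s < T \<and> v s j < v t' j}"
      using assms by (auto dest: less_trans)
    then have "{s. s < T \<and> v s j < v t' j} \<subset> {s. s < T \<and> v s j < v t j}"
      by blast
    then have "coord_rank T v t' j < coord_rank T v t j"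
      unfolding coord_rank_def by (intro psubset_card_mono) auto
    with \<open>coord_rank T v t j \<le> coord_rank T v t' j\<close> show False by simp
  qed
qed

lemma coord_rank_less:
  assumes "t < T"
  shows "coord_rank T v t j < T"
proof -
  have "{s. s < T \<and> v s j < v t j} \<subseteq> {..<T} - {t}"
    by auto
  then have "coord_rank T v t j \<le> card ({..<T} - {t})"
    unfolding coord_rank_def by (intro card_mono) auto
  with assms show ?thesis by simp
qed

lemma digits_of_sum:
  fixes B :: nat
  assumes "\<forall>k<m. f k < B"
  shows "(\<Sum>k<m. f k * B ^ k) < B ^ m" and "k < m \<Longrightarrow> (\<Sum>k<m. f k * B ^ k) div B ^ k mod B = f k"
proof -
  have "(\<Sum>k<m. f k * B ^ k) < B ^ m \<and> (\<forall>k<m. (\<Sum>k<m. f k * B ^ k) div B ^ k mod B = f k)"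
    using assms
  proof (induction m)
    case (Suc m)
    let ?y = "\<Sum>k<m. f k * B ^ k"
    have y: "?y < B ^ m" "\<forall>k<m. ?y div B ^ k mod B = f k" and fm: "f m < B"
      using Suc by auto
    have "?y + f m * B ^ m < Suc (f m) * B ^ m"
      using y(1) by simp
    also have "\<dots> \<le> B * B ^ m"
      using fm by (intro mult_le_mono1) simp
    also have "\<dots> = B ^ Suc m"
      by simp
    finally have bound: "?y + f m * B ^ m < B ^ Suc m" .
    have "(?y + f m * B ^ m) div B ^ k mod B = f k" if "k < Suc m" for k
    proof (cases "k = m")
      case True
      then show ?thesis using y(1) fm by (simp add: div_add1_eq)
    next
      case False
      then have "k < m" using that by simp
      then have "B ^ m = B ^ k * (B * B ^ (m - Suc k))"
        by (simp flip: power_add power_Suc)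
      then have "(?y + f m * B ^ m) div B ^ k = ?y div B ^ k + B * (f m * B ^ (m - Suc k))"
        using fm by (simp add: div_add1_eq mult.left_commute)
      then show ?thesis using y(2) \<open>k < m\<close> by simp
    qed
    with bound show ?case by simp
  qed simp
  then show "(\<Sum>k<m. f k * B ^ k) < B ^ m" and "k < m \<Longrightarrow> (\<Sum>k<m. f k * B ^ k) div B ^ k mod B = f k"
    by blast+
qed

definition coords_of_code :: "nat \<Rightarrow> nat \<Rightarrow> nat \<Rightarrow> nat \<Rightarrow> nat \<Rightarrow> nat" where
  "coords_of_code B d y t j = y div B ^ (t * d + j) mod B"

definition labels_of_code :: "nat \<Rightarrow> nat \<Rightarrow> nat \<Rightarrow> nat \<Rightarrow> bool" where
  "labels_of_code x z i c \<longleftrightarrow> bit z (i * Suc x + c)"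

lemma ex_small_code_same_order_type:
  fixes x N :: nat
  defines "T \<equiv> 2 * box_count x N"
  shows "\<exists>y<T ^ (T * d). \<exists>z<2 ^ (box_count x N * Suc x).
    same_order_type x N d v l (coords_of_code T d y) (labels_of_code x z)"
proof -
  define f where "f k = coord_rank T v (k div d) (k mod d)" for k
  define y where "y = (\<Sum>k<T * d. f k * T ^ k)"
  have "f k < T" if "k < T * d" for k
    unfolding f_def using that by (intro coord_rank_less) (simp add: less_mult_imp_div_less)
  note y_digits = digits_of_sum[of "T * d" f T, folded y_def]
  have y: "coords_of_code T d y t j = coord_rank T v t j" if "t < T" "j < d" for t j
    using y_digits(2)[of "t * d + j"] \<open>\<And>k. k < T * d \<Longrightarrow> f k < T\<close> mult_add_less[OF that]
    unfolding coords_of_code_def f_def by (simp add: mult_add_div_mod[OF that(2)] that(2))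
  define g :: "nat \<Rightarrow> nat" where "g k = of_bool (l (k div Suc x) (k mod Suc x))" for k
  define z where "z = (\<Sum>k<box_count x N * Suc x. g k * 2 ^ k)"
  have "g k < 2" for k
    by (simp add: g_def of_bool_def)
  note z_digits = digits_of_sum[of "box_count x N * Suc x" g 2, folded z_def]
  have z: "labels_of_code x z i c \<longleftrightarrow> l i c" if "i < box_count x N" "c \<le> x" for i c
  proof -
    have "c < Suc x"
      using that(2) by simp
    have "z div 2 ^ (i * Suc x + c) mod 2 = g (i * Suc x + c)"
      using z_digits(2) mult_add_less[OF that(1) \<open>c < Suc x\<close>] \<open>\<And>k. g k < 2\<close> by blast
    also have "\<dots> = of_bool (l i c)"
      unfolding g_def mult_add_div_mod[OF \<open>c < Suc x\<close>] ..
    finally show ?thesis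
      unfolding labels_of_code_def bit_iff_odd odd_iff_mod_2_eq_one by simp
  qed
  have "same_order_type x N d v l (coord_rank T v) l"
    unfolding same_order_type_def T_def by (simp add: coord_rank_le_iff)
  moreover have "same_order_type x N d (coord_rank T v) l (coords_of_code T d y) (labels_of_code x z)"
    by (rule same_order_type_if_eq_on) (simp_all add: y z flip: T_def)
  ultimately show ?thesis
    using y_digits(1) z_digits(1) \<open>\<And>k. k < T * d \<Longrightarrow> f k < T\<close> \<open>\<And>k. g k < 2\<close>
    by (blast intro: same_order_type_trans)
qed

text \<open>Replacing coordinates by their ranks among the tokens and labels by bits, an approximation of
depth \<open>N\<close> exists iff one with codes below explicit bounds does.\<close>

definition refutable_at :: "nat \<Rightarrow> nat \<Rightarrow> nat \<Rightarrow> bool" where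
  "refutable_at d N x \<longleftrightarrow>
    (\<exists>y<(2 * box_count x N) ^ (2 * box_count x N * d). \<exists>z<2 ^ (box_count x N * Suc x).
       approx_countermodel x N d (coords_of_code (2 * box_count x N) d y) (labels_of_code x z))"

lemma ex_small_code_below:
  assumes "approx_countermodel x M d v l" "N \<le> M"
  shows "\<exists>y<(2 * box_count x N) ^ (2 * box_count x N * d). \<exists>z<2 ^ (box_count x N * Suc x).
    approx_countermodel x N d (coords_of_code (2 * box_count x N) d y) (labels_of_code x z) \<and>
    same_order_type x N d (coords_of_code (2 * box_count x N) d y) (labels_of_code x z) v l"
  using approx_countermodel_mono[OF assms] ex_small_code_same_order_type[of x N d v l]
  by (metis approx_countermodel_same_order_type same_order_type_sym)

lemma refutable_at_if_approx_countermodel: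
  "approx_countermodel x N d v l \<Longrightarrow> refutable_at d N x"
  unfolding refutable_at_def using ex_small_code_below[of x N d v l N] by blast

lemma decidable_refutable_at:
  assumes "computable k D" "computable k M" "computable k X"
  shows "decidable k (\<lambda>xs. refutable_at (D xs) (M xs) (X xs))"
  unfolding refutable_at_def approx_countermodel_def all_rcc8 rcc8_coord.simps code_rel.simps
    box_count_def witness_def coords_of_code_def labels_of_code_def bit_iff_odd odd_iff_mod_2_eq_one
  using assms by (intro computable_intros; simp)

section \<open>Compactness\<close>

locale finite_inverse_system =
  fixes C :: "nat \<Rightarrow> 'a set" and p :: "nat \<Rightarrow> 'a \<Rightarrow> 'a"
  assumes finite_level: "finite (C N)"
    and nonempty_level: "C N \<noteq> {}"
    and p_level: "c \<in> C (Suc N) \<Longrightarrow> p N c \<in> C N"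

begin

text \<open>\<open>proj k N\<close> maps level \<open>N + k\<close> down to level \<open>N\<close>.\<close>

fun proj :: "nat \<Rightarrow> nat \<Rightarrow> 'a \<Rightarrow> 'a" where
  "proj 0 N c = c"
| "proj (Suc k) N c = proj k N (p (N + k) c)"

lemma proj_level: "c \<in> C (N + k) \<Longrightarrow> proj k N c \<in> C N"
  by (induction k arbitrary: c) (auto dest: p_level)

lemma proj_proj: "proj a N (proj b (N + a) c) = proj (a + b) N c"
  by (induction b arbitrary: c) (auto simp: add.assoc)

definition extendable :: "nat \<Rightarrow> 'a \<Rightarrow> bool" where
  "extendable N c \<longleftrightarrow> c \<in> C N \<and> (\<forall>k. \<exists>e\<in>C (N + k). proj k N e = c)"

lemma ex_extendable:
  assumes "finite S" "S \<subseteq> C N" and ext: "\<And>k. \<exists>e\<in>C (N + k). proj k N e \<in> S"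
  shows "\<exists>c\<in>S. extendable N c"
proof (rule ccontr)
  assume "\<not> ?thesis"
  then have "\<forall>c\<in>S. \<exists>k. \<forall>e\<in>C (N + k). proj k N e \<noteq> c"
    using assms(2) unfolding extendable_def by blast
  then obtain bound where bound: "\<And>c e. c \<in> S \<Longrightarrow> e \<in> C (N + bound c) \<Longrightarrow> proj (bound c) N e \<noteq> c"
    by metis
  define K where "K = Max (bound ` S)"
  obtain e where e: "e \<in> C (N + K)" and c: "proj K N e \<in> S"
    using ext by blast
  let ?c = "proj K N e"
  have "bound ?c \<le> K"
    using Max_ge[OF finite_imageI[OF assms(1)] imageI[OF c, of bound]] unfolding K_def .
  then have "proj (K - bound ?c) (N + bound ?c) e \<in> C (N + bound ?c)"
    using e by (intro proj_level) simp
  moreover have "proj (bound ?c) N (proj (K - bound ?c) (N + bound ?c) e) = ?c"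
    using \<open>bound ?c \<le> K\<close> by (simp add: proj_proj)
  ultimately show False
    using bound[OF c] by blast
qed

lemma extendable_Suc:
  assumes "extendable N c"
  shows "\<exists>c'. extendable (Suc N) c' \<and> p N c' = c"
proof -
  have "\<exists>e\<in>C (Suc N + k). proj k (Suc N) e \<in> {c' \<in> C (Suc N). p N c' = c}" for k
  proof -
    obtain e where e: "e \<in> C (N + Suc k)" "proj (Suc k) N e = c"
      using assms unfolding extendable_def by blast
    have "p N (proj k (Suc N) e) = proj (Suc k) N e"
      using proj_proj[of 1 N k e] by simp
    with e show ?thesis
      by (intro bexI[of _ e]) (auto intro: proj_level)
  qed
  then show ?thesis
    using ex_extendable[of "{c' \<in> C (Suc N). p N c' = c}" "Suc N"] finite_level by auto
qed

lemma extendable_0: "\<exists>c. extendable 0 c"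
proof -
  have "\<exists>e\<in>C (0 + k). proj k 0 e \<in> C 0" for k
    using nonempty_level[of k] proj_level[of _ 0 k] by auto
  then show ?thesis
    using ex_extendable[of "C 0" 0] finite_level by blast
qed

theorem koenig: "\<exists>f. \<forall>N. f N \<in> C N \<and> p N (f (Suc N)) = f N"
proof -
  define f where "f = rec_nat (SOME c. extendable 0 c) (\<lambda>N c. SOME c'. extendable (Suc N) c' \<and> p N c' = c)"
  have "extendable N (f N)" for N
  proof (induction N)
    case 0
    then show ?case
      unfolding f_def using extendable_0 by (simp add: someI_ex)
  next
    case (Suc N)
    then show ?case
      unfolding f_def using extendable_Suc by (simp add: someI_ex[where P="\<lambda>c'. extendable (Suc N) c' \<and> _ c'"])
  qed
  moreover have "p N (f (Suc N)) = f N" for N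
    using someI_ex[OF extendable_Suc[OF \<open>extendable N (f N)\<close>]] unfolding f_def by simp
  ultimately show ?thesis
    unfolding extendable_def by blast
qed

end

lemma coherent_approx_countermodels:
  assumes "\<And>N. refutable_at d N x"
  shows "\<exists>(V :: nat \<Rightarrow> nat \<Rightarrow> nat \<Rightarrow> nat) L. \<forall>N. approx_countermodel x N d (V N) (L N) \<and>
    same_order_type x N d (V N) (L N) (V (Suc N)) (L (Suc N))"
proof -
  let ?V = "\<lambda>N y. coords_of_code (2 * box_count x N) d y" and ?L = "labels_of_code x"
  define C where "C N = {(y, z). y < (2 * box_count x N) ^ (2 * box_count x N * d) \<and>
    z < 2 ^ (box_count x N * Suc x) \<and> approx_countermodel x N d (?V N y) (?L z)}" for N
  let ?P = "\<lambda>N c c'. c \<in> C N \<and> same_order_type x N d (?V N (fst c)) (?L (snd c)) (?V (Suc N) (fst c')) (?L (snd c'))"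
  define p where "p N c' = (SOME c. ?P N c c')" for N c'
  have ex_P: "\<exists>c. ?P N c c'" if "c' \<in> C (Suc N)" for N c'
    using that ex_small_code_below[of x "Suc N" d "?V (Suc N) (fst c')" "?L (snd c')" N]
    unfolding C_def by fastforce
  have p: "?P N (p N c') c'" if "c' \<in> C (Suc N)" for N c'
    unfolding p_def using ex_P[OF that] by (rule someI_ex)
  interpret finite_inverse_system C p
  proof
    show "finite (C N)" for N
      by (rule finite_subset[of _ "{..<(2 * box_count x N) ^ (2 * box_count x N * d)} \<times> {..<2 ^ (box_count x N * Suc x)}"])
        (auto simp: C_def)
    show "C N \<noteq> {}" for N
      using assms[of N] unfolding refutable_at_def C_def by blast
  qed (use p in blast)
  obtain f where f: "\<And>N. f N \<in> C N" "\<And>N. p N (f (Suc N)) = f N"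
    using koenig by blast
  show ?thesis
  proof (intro exI allI conjI)
    show "approx_countermodel x N d (?V N (fst (f N))) (?L (snd (f N)))" for N
      using f(1)[of N] unfolding C_def by auto
    show "same_order_type x N d (?V N (fst (f N))) (?L (snd (f N))) (?V (Suc N) (fst (f (Suc N)))) (?L (snd (f (Suc N))))" for N
      using p[OF f(1)[of "Suc N"]] f(2)[of N] by simp
  qed
qed

definition order_embedding_real :: "(nat \<Rightarrow> nat \<Rightarrow> bool) \<Rightarrow> nat \<Rightarrow> real" where
  "order_embedding_real R t = (\<Sum>u. if R u t \<and> \<not> R t u then (1/2) ^ u else 0)"

lemma order_embedding_real_le_iff:
  assumes total: "\<And>a b. R a b \<or> R b a" and trans: "\<And>a b c. R a b \<Longrightarrow> R b c \<Longrightarrow> R a c"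
  shows "order_embedding_real R t \<le> order_embedding_real R t' \<longleftrightarrow> R t t'"
proof -
  define w where "w t u = (if R u t \<and> \<not> R t u then (1/2::real) ^ u else 0)" for t u
  have emb: "order_embedding_real R t = suminf (w t)" for t
    unfolding order_embedding_real_def w_def ..
  have summable: "summable (w t)" for t
    by (rule summable_comparison_test[OF _ summable_geometric[of "1/2::real"]]) (auto simp: w_def)
  have mono: "w t u \<le> w t' u" if "R t t'" for t t' u
    using that trans unfolding w_def by auto
  show ?thesis
    unfolding emb
  proof
    assume "R t t'"
    then show "suminf (w t) \<le> suminf (w t')"
      using mono summable by (intro suminf_le) auto
  next
    assume le: "suminf (w t) \<le> suminf (w t')"
    show "R t t'"
    proof (rule ccontr)
      assume "\<not> R t t'"
      then have "R t' t"
        using total by blast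
      have "(1/2::real) ^ t' = (\<Sum>u\<in>{t'}. w t u - w t' u)"
        using \<open>\<not> R t t'\<close> \<open>R t' t\<close> by (simp add: w_def)
      also have "\<dots> \<le> (\<Sum>u. w t u - w t' u)"
        using mono[OF \<open>R t' t\<close>] summable by (intro sum_le_suminf summable_diff) auto
      also have "\<dots> = suminf (w t) - suminf (w t')"
        by (rule suminf_diff[OF summable summable, symmetric])
      finally have "(1/2::real) ^ t' \<le> suminf (w t) - suminf (w t')" .
      moreover have "(0::real) < (1/2) ^ t'"
        by simp
      ultimately show False
        using le by linarith
    qed
  qed
qed

lemma same_order_type_chain:
  assumes "\<And>N. same_order_type x N d (V N) (L N) (V (Suc N)) (L (Suc N))"
  shows "same_order_type x N d (V N) (L N) (V (N + k)) (L (N + k))"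
proof (induction k)
  case (Suc k)
  then show ?case
    using same_order_type_mono[OF assms[of "N + k"]] by (auto intro: same_order_type_trans)
qed (simp add: same_order_type_refl)

lemma same_order_type_chain_le_iff:
  assumes "\<And>N. same_order_type x N d (V N) (L N) (V (Suc N)) (L (Suc N))"
    and "t < 2 * box_count x N" "t' < 2 * box_count x N" "t < 2 * box_count x M" "t' < 2 * box_count x M" "j < d"
  shows "V N t j \<le> V N t' j \<longleftrightarrow> V M t j \<le> V M t' j"
proof -
  have "V N t j \<le> V N t' j \<longleftrightarrow> V (N + M) t j \<le> V (N + M) t' j"
    using same_order_type_chain[OF assms(1), of N M] assms(2,3,6) unfolding same_order_type_def by blast
  also have "\<dots> \<longleftrightarrow> V M t j \<le> V M t' j"
    using same_order_type_chain[OF assms(1), of M N] assms(4-6) unfolding same_order_type_def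
    by (simp add: add.commute)
  finally show ?thesis .
qed

lemma same_order_type_limit:
  fixes V :: "nat \<Rightarrow> nat \<Rightarrow> nat \<Rightarrow> nat"
  assumes chain: "\<And>N. same_order_type x N d (V N) (L N) (V (Suc N)) (L (Suc N))"
  shows "\<exists>(v :: nat \<Rightarrow> nat \<Rightarrow> real) l. \<forall>N. same_order_type x N d (V N) (L N) v l"
proof -
  have token_less: "t < 2 * box_count x M" if "t \<le> M" for t M
    using less_box_count[OF that, of x] by simp
  define R where "R j t t' \<longleftrightarrow> V (t + t') t j \<le> V (t + t') t' j" for j t t'
  have R: "V M t j \<le> V M t' j \<longleftrightarrow> R j t t'"
    if "t < 2 * box_count x M" "t' < 2 * box_count x M" "j < d" for M t t' j
    unfolding R_def using that token_less[of t "t + t'"] token_less[of t' "t + t'"]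
    by (intro same_order_type_chain_le_iff[OF chain]) simp_all
  have total: "R j a b \<or> R j b a" if "j < d" for j a b
    using R[of a "a + b" b j] R[of b "a + b" a j] token_less[of a "a + b"] token_less[of b "a + b"] that
      nat_le_linear[of "V (a + b) a j" "V (a + b) b j"]
    by simp
  have trans: "R j a c" if "j < d" "R j a b" "R j b c" for j a b c
  proof -
    let ?M = "a + b + c"
    have "a < 2 * box_count x ?M" "b < 2 * box_count x ?M" "c < 2 * box_count x ?M"
      by (simp_all add: token_less)
    with R[of a ?M b j] R[of b ?M c j] R[of a ?M c j] that show ?thesis
      using le_trans[of "V ?M a j" "V ?M b j" "V ?M c j"] by blast
  qed
  have emb: "order_embedding_real (R j) t \<le> order_embedding_real (R j) t' \<longleftrightarrow> R j t t'" if "j < d" for j t t'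
    by (rule order_embedding_real_le_iff) (use total trans that in blast)+
  define v where "v t j = order_embedding_real (R j) t" for t j
  define l where "l i c = L i i c" for i c
  have "same_order_type x N d (V N) (L N) v l" for N
    unfolding same_order_type_def
  proof (intro conjI allI impI)
    show "V N t j \<le> V N t' j \<longleftrightarrow> v t j \<le> v t' j"
      if "t < 2 * box_count x N" "t' < 2 * box_count x N" "j < d" for t t' j
      using R[OF that] emb[OF that(3)] unfolding v_def by blast
    show "L N i c \<longleftrightarrow> l i c" if "i < box_count x N" "c \<le> x" for i c
      using same_order_type_chain[OF chain, of N i] same_order_type_chain[OF chain, of i N] that
        less_box_count[of i i x]
      unfolding same_order_type_def l_def by (simp add: add.commute)
  qed
  then show ?thesis by blast
qed

lemma real_approx_countermodels:
  assumes "\<And>N. refutable_at d N x"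
  shows "\<exists>(v :: nat \<Rightarrow> nat \<Rightarrow> real) l. \<forall>N. approx_countermodel x N d v l"
proof -
  obtain V :: "nat \<Rightarrow> nat \<Rightarrow> nat \<Rightarrow> nat" and L where
    VL: "\<And>N. approx_countermodel x N d (V N) (L N)" "\<And>N. same_order_type x N d (V N) (L N) (V (Suc N)) (L (Suc N))"
    using coherent_approx_countermodels[OF assms] by blast
  obtain v :: "nat \<Rightarrow> nat \<Rightarrow> real" and l where "\<And>N. same_order_type x N d (V N) (L N) v l"
    using same_order_type_limit[OF VL(2)] by blast
  with VL(1) show ?thesis
    using approx_countermodel_same_order_type by blast
qed

definition rel_of_code :: "nat \<Rightarrow> rcc8" where
  "rel_of_code r = [DC, EC, PO, EQ, TPP, NTPP, TPPI, NTPPI] ! r"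

lemma rel_of_code_code_rel [simp]: "rel_of_code (code_rel R) = R"
  by (cases R) (simp_all add: rel_of_code_def)

lemma code_rel_le: "code_rel R \<le> 7"
  by (cases R) simp_all

lemma snd_prod_decode_less:
  assumes "fst (prod_decode c) \<noteq> 0"
  shows "snd (prod_decode c) < c"
proof -
  obtain t a where c: "c = prod_encode (t, a)"
    by (metis prod_decode_inverse surj_pair)
  have "n \<le> triangle n" for n
    by (induction n) (auto simp: triangle_Suc)
  then have "a \<le> triangle (t + a)"
    by (meson le_add2 order_trans)
  moreover have "t \<noteq> 0" "snd (prod_decode c) = a"
    using c assms by simp_all
  moreover have "c = triangle (t + a) + t"
    using c by (simp add: prod_encode_def)
  ultimately show ?thesis
    by simp
qed

text \<open>Numbers that are not codes of formulas decode to arbitrary formulas.\<close>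

function fm_of_code :: "nat \<Rightarrow> fm" where
  "fm_of_code c =
    (let t = fst (prod_decode c); a = snd (prod_decode c) in
     if t = 0 then PVar a
     else if t = 1 then Neg (fm_of_code a)
     else if t = 2 then Conj (fm_of_code (fst (prod_decode a))) (fm_of_code (snd (prod_decode a)))
     else if t \<le> 10 then Box (rel_of_code (t - 3)) (fm_of_code a)
     else PVar 0)"
  by auto

termination
  using snd_prod_decode_less le_less_trans[OF prod_decode_le(1)[OF order_refl] snd_prod_decode_less]
    le_less_trans[OF prod_decode_le(2)[OF order_refl] snd_prod_decode_less]
  by (relation "Wellfounded.measure id") auto

declare fm_of_code.simps [simp del]

lemma fm_of_code_code_fm [simp]: "fm_of_code (code_fm \<phi>) = \<phi>"
  using code_rel_le by (induction \<phi>) (subst fm_of_code.simps, simp add: Let_def)+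

lemma fm_of_code_Neg: "fst (prod_decode c) = 1 \<Longrightarrow> fm_of_code c = Neg (fm_of_code (snd (prod_decode c)))"
  by (subst fm_of_code.simps) simp

lemma fm_of_code_Conj:
  "fst (prod_decode c) = 2 \<Longrightarrow> fm_of_code c =
    Conj (fm_of_code (fst (prod_decode (snd (prod_decode c))))) (fm_of_code (snd (prod_decode (snd (prod_decode c)))))"
  by (subst fm_of_code.simps) (simp add: Let_def)

lemma fm_of_code_Box:
  "fst (prod_decode c) = 3 + code_rel R \<Longrightarrow> fm_of_code c = Box R (fm_of_code (snd (prod_decode c)))"
  using code_rel_le[of R] by (subst fm_of_code.simps) simp

lemma code_fm_subformula_le:
  "code_fm \<phi> \<le> code_fm (Neg \<phi>)" "code_fm \<phi> \<le> code_fm (Box R \<phi>)"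
  "code_fm \<phi> \<le> code_fm (Conj \<phi> \<psi>)" "code_fm \<psi> \<le> code_fm (Conj \<phi> \<psi>)"
  by (simp_all add: le_prod_encode_2 le_prod_encode_1 le_trans[OF le_prod_encode_1 le_prod_encode_2]
      le_trans[OF le_prod_encode_2 le_prod_encode_2])

section \<open>Countermodels and their approximations\<close>

lemma approx_countermodel_all_levels:
  assumes "\<And>N. approx_countermodel x N d v l"
  shows approx_proper: "j < d \<Longrightarrow> lower v i j < upper v i j"
    and approx_EQ: "rcc8_coord d EQ (lower v i) (upper v i) (lower v i') (upper v i') \<Longrightarrow> c \<le> x \<Longrightarrow>
      l i c = l i' c"
    and approx_Neg: "c \<le> x \<Longrightarrow> fst (prod_decode c) = 1 \<Longrightarrow> l i c \<longleftrightarrow> \<not> l i (snd (prod_decode c))"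
    and approx_Conj: "c \<le> x \<Longrightarrow> fst (prod_decode c) = 2 \<Longrightarrow>
      l i c \<longleftrightarrow> l i (fst (prod_decode (snd (prod_decode c)))) \<and> l i (snd (prod_decode (snd (prod_decode c))))"
    and approx_Box: "c \<le> x \<Longrightarrow> fst (prod_decode c) = 3 + code_rel R \<Longrightarrow> l i c \<Longrightarrow>
      rcc8_coord d R (lower v i) (upper v i) (lower v i') (upper v i') \<Longrightarrow> l i' (snd (prod_decode c))"
    and approx_witness: "c \<le> x \<Longrightarrow> fst (prod_decode c) = 3 + code_rel R \<Longrightarrow> \<not> l i c \<Longrightarrow>
      rcc8_coord d R (lower v i) (upper v i) (lower v (witness x i c)) (upper v (witness x i c)) \<and>
      \<not> l (witness x i c) (snd (prod_decode c))"
    and approx_root: "\<not> l 0 x"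
proof -
  have i: "i < box_count x (i + i')" "i' < box_count x (i + i')" "i < box_count x (Suc i)" "i < Suc i"
    by (simp_all add: less_box_count)
  note L = assms[of "i + i'", unfolded approx_countermodel_def]
  note W = assms[of "Suc i", unfolded approx_countermodel_def]
  show "j < d \<Longrightarrow> lower v i j < upper v i j"
    using L[THEN conjunct1, rule_format, OF i(1)] .
  show "rcc8_coord d EQ (lower v i) (upper v i) (lower v i') (upper v i') \<Longrightarrow> c \<le> x \<Longrightarrow> l i c = l i' c"
    using L[THEN conjunct2, THEN conjunct1, rule_format, OF i(1,2)] by blast
  show "c \<le> x \<Longrightarrow> fst (prod_decode c) = 1 \<Longrightarrow> l i c \<longleftrightarrow> \<not> l i (snd (prod_decode c))"
    and "c \<le> x \<Longrightarrow> fst (prod_decode c) = 2 \<Longrightarrow>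
      l i c \<longleftrightarrow> l i (fst (prod_decode (snd (prod_decode c)))) \<and> l i (snd (prod_decode (snd (prod_decode c))))"
    using L[THEN conjunct2, THEN conjunct2, THEN conjunct1, rule_format, OF i(1)] by blast+
  show "c \<le> x \<Longrightarrow> fst (prod_decode c) = 3 + code_rel R \<Longrightarrow> l i c \<Longrightarrow>
      rcc8_coord d R (lower v i) (upper v i) (lower v i') (upper v i') \<Longrightarrow> l i' (snd (prod_decode c))"
    using L[THEN conjunct2, THEN conjunct2, THEN conjunct2, THEN conjunct1, rule_format, OF i(1,2)] by blast
  show "c \<le> x \<Longrightarrow> fst (prod_decode c) = 3 + code_rel R \<Longrightarrow> \<not> l i c \<Longrightarrow>
      rcc8_coord d R (lower v i) (upper v i) (lower v (witness x i c)) (upper v (witness x i c)) \<and>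
      \<not> l (witness x i c) (snd (prod_decode c))"
    using W[THEN conjunct2, THEN conjunct2, THEN conjunct2, THEN conjunct2, THEN conjunct1, rule_format, OF i(4)]
    by blast
  show "\<not> l 0 x"
    using assms[of 0] unfolding approx_countermodel_def by (elim conjE)
qed

lemma sat_iff_label:
  fixes S :: "nat \<Rightarrow> 'a::topological_space set"
  assumes approx: "\<And>N. approx_countermodel x N d v l"
    and rel: "\<And>R i i'. rcc8_rel R (S i) (S i') \<longleftrightarrow> rcc8_coord d R (lower v i) (upper v i) (lower v i') (upper v i')"
  defines "V \<equiv> \<lambda>k. {S i | i. l i (code_fm (PVar k))}"
  shows "code_fm \<psi> \<le> x \<Longrightarrow> sat (range S) V (S i) \<psi> \<longleftrightarrow> l i (code_fm \<psi>)"
proof (induction \<psi> arbitrary: i)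
  case (PVar k)
  have "l i (code_fm (PVar k))" if "S i' = S i" "l i' (code_fm (PVar k))" for i'
    using approx_EQ[OF approx, of i' i] rel[of EQ i' i] that PVar by simp
  then show ?case
    unfolding V_def by auto
next
  case (Neg \<psi>)
  then show ?case
    using approx_Neg[OF approx, of "code_fm (Neg \<psi>)" i] code_fm_subformula_le(1)[of \<psi>] by simp
next
  case (Conj \<psi>1 \<psi>2)
  have "code_fm \<psi>1 \<le> x" "code_fm \<psi>2 \<le> x"
    using Conj.prems code_fm_subformula_le(3,4) by (meson le_trans)+
  with Conj show ?case
    using approx_Conj[OF approx, of "code_fm (Conj \<psi>1 \<psi>2)" i] by simp
next
  case (Box R \<psi>)
  let ?c = "code_fm (Box R \<psi>)"
  have IH: "sat (range S) V (S i') \<psi> \<longleftrightarrow> l i' (code_fm \<psi>)" for i'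
    using Box code_fm_subformula_le(2)[of \<psi> R] by simp
  show ?case
  proof
    assume "sat (range S) V (S i) (Box R \<psi>)"
    then show "l i ?c"
      using approx_witness[OF approx Box.prems, of R i] rel IH by auto
  next
    assume "l i ?c"
    then show "sat (range S) V (S i) (Box R \<psi>)"
      using approx_Box[OF approx Box.prems, of R i] rel IH by auto
  qed
qed

lemma ex_bij_betw_lessThan_card: "\<exists>h. bij_betw h {..<CARD('n::finite)} (UNIV :: 'n set)"
  using ex_bij_betw_nat_finite[of "UNIV :: 'n set"] by (simp add: atLeast0LessThan)

lemma rcc8_rel_boxes_iff:
  fixes A B :: "nat \<Rightarrow> real ^ 'n"
  assumes h: "bij_betw h {..<d} UNIV" and AB: "\<And>i k. A i $ k < B i $ k"
    and v: "\<And>i j. j < d \<Longrightarrow> lower v i j = A i $ h j \<and> upper v i j = B i $ h j"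
  shows "rcc8_rel R (cbox (A i) (B i)) (cbox (A i') (B i')) \<longleftrightarrow>
    rcc8_coord d R (lower v i) (upper v i) (lower v i') (upper v i')"
proof -
  have "rcc8_rel R (cbox (A i) (B i)) (cbox (A i') (B i')) \<longleftrightarrow>
      rcc8_coord d R (\<lambda>j. A i $ h j) (\<lambda>j. B i $ h j) (\<lambda>j. A i' $ h j) (\<lambda>j. B i' $ h j)"
    using AB by (intro rcc8_rel_cbox_iff[OF h]) auto
  also have "\<dots> \<longleftrightarrow> rcc8_coord d R (lower v i) (upper v i) (lower v i') (upper v i')"
    by (rule rcc8_coord_cong) (simp add: v)
  finally show ?thesis .
qed

lemma cbox_in_rects: "(\<And>k. a $ k < b $ k) \<Longrightarrow> cbox a b \<in> rects"
  unfolding rects_def by auto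

lemma boxes_of_coords:
  fixes v :: "nat \<Rightarrow> nat \<Rightarrow> real"
  assumes "\<And>i j. j < CARD('n::finite) \<Longrightarrow> lower v i j < upper v i j"
  obtains h :: "nat \<Rightarrow> 'n::finite" and A B :: "nat \<Rightarrow> real ^ 'n"
  where "bij_betw h {..<CARD('n)} UNIV" "\<And>i k. A i $ k < B i $ k"
    "\<And>i j. j < CARD('n) \<Longrightarrow> lower v i j = A i $ h j \<and> upper v i j = B i $ h j"
proof -
  obtain h where h: "bij_betw h {..<CARD('n)} (UNIV :: 'n set)"
    using ex_bij_betw_lessThan_card by blast
  define h' where "h' = inv_into {..<CARD('n)} h"
  have "k \<in> h ` {..<CARD('n)}" for k
    using bij_betw_imp_surj_on[OF h] by simp
  then have "h' k < CARD('n)" for k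
    unfolding h'_def using inv_into_into[of k h "{..<CARD('n)}"] by auto
  moreover have "h' (h j) = j" if "j < CARD('n)" for j
    unfolding h'_def using bij_betw_inv_into_left[OF h] that by simp
  ultimately show ?thesis
    using assms by (intro that[OF h, of "\<lambda>i. \<chi> k. lower v i (h' k)" "\<lambda>i. \<chi> k. upper v i (h' k)"]) simp_all
qed

lemma not_valid_if_approx_countermodels:
  fixes v :: "nat \<Rightarrow> nat \<Rightarrow> real"
  assumes approx: "\<And>N. approx_countermodel (code_fm \<phi>) N CARD('n::finite) v l"
  shows "\<phi> \<notin> logic_S_rect TYPE('n)"
proof -
  obtain h :: "nat \<Rightarrow> 'n" and A B where h: "bij_betw h {..<CARD('n)} UNIV"
    and AB: "\<And>i k. A i $ k < B i $ k"
    and v: "\<And>i j. j < CARD('n) \<Longrightarrow> lower v i j = A i $ h j \<and> upper v i j = B i $ h j"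
    using boxes_of_coords approx_proper[OF approx] by metis
  let ?S = "\<lambda>i. cbox (A i) (B i)" and ?V = "\<lambda>k. {cbox (A i) (B i) | i. l i (code_fm (PVar k))}"
  have "sat (range ?S) ?V (?S 0) \<phi> \<longleftrightarrow> l 0 (code_fm \<phi>)"
    by (rule sat_iff_label[OF approx rcc8_rel_boxes_iff[OF h AB v]]) simp_all
  then have "\<not> sat (range ?S) ?V (?S 0) \<phi>"
    using approx_root[OF approx] by blast
  moreover have "range ?S \<subseteq> rects"
    using AB by (blast intro: cbox_in_rects)
  ultimately show ?thesis
    unfolding logic_S_rect_def mem_Collect_eq not_all by (intro exI[of _ "range ?S"]) auto
qed

fun witness_tree :: "('a \<Rightarrow> nat \<Rightarrow> 'a) \<Rightarrow> 'a \<Rightarrow> nat \<Rightarrow> nat \<Rightarrow> 'a" where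
  "witness_tree sel s x 0 = s"
| "witness_tree sel s x (Suc m) = sel (witness_tree sel s x (m div Suc x)) (m mod Suc x)"

lemma witness_tree_witness:
  assumes "c \<le> x"
  shows "witness_tree sel s x (witness x i c) = sel (witness_tree sel s x i) c"
proof -
  have "c < Suc x"
    using assms by simp
  show ?thesis
    unfolding witness_def witness_tree.simps(2) mult_add_div_mod[OF \<open>c < Suc x\<close>] ..
qed

lemma witness_tree_closed: "s \<in> W \<Longrightarrow> (\<And>w c. w \<in> W \<Longrightarrow> sel w c \<in> W) \<Longrightarrow> witness_tree sel s x m \<in> W"
  by (induction sel s x m rule: witness_tree.induct) auto

lemma witness_selection:
  obtains sel where "\<And>w c. w \<in> W \<Longrightarrow> sel w c \<in> W"
    and "\<And>w c R. w \<in> W \<Longrightarrow> fst (prod_decode c) = 3 + code_rel R \<Longrightarrow> \<not> sat W V w (fm_of_code c) \<Longrightarrow>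
      rcc8_rel R w (sel w c) \<and> \<not> sat W V (sel w c) (fm_of_code (snd (prod_decode c)))"
proof -
  define Q where "Q w c t \<longleftrightarrow> t \<in> W \<and> (\<forall>R. fst (prod_decode c) = 3 + code_rel R \<and> \<not> sat W V w (fm_of_code c) \<longrightarrow>
    rcc8_rel R w t \<and> \<not> sat W V t (fm_of_code (snd (prod_decode c))))" for w c t
  have "\<exists>t. Q w c t" if "w \<in> W" for w c
  proof (cases "\<exists>R. fst (prod_decode c) = 3 + code_rel R \<and> \<not> sat W V w (fm_of_code c)")
    case True
    then obtain R where R: "fst (prod_decode c) = 3 + code_rel R" "\<not> sat W V w (fm_of_code c)"
      by blast
    then obtain t where "t \<in> W" "rcc8_rel R w t" "\<not> sat W V t (fm_of_code (snd (prod_decode c)))"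
      by (auto simp: fm_of_code_Box)
    moreover have "R' = R" if "fst (prod_decode c) = 3 + code_rel R'" for R'
      using R(1) that by (metis add_left_cancel rel_of_code_code_rel)
    ultimately show ?thesis
      unfolding Q_def by blast
  next
    case False
    with that show ?thesis
      unfolding Q_def by blast
  qed
  then have "Q w c (SOME t. Q w c t)" if "w \<in> W" for w c
    using that by (blast intro: someI_ex)
  then show ?thesis
    by (intro that[of "\<lambda>w c. SOME t. Q w c t"]) (auto simp: Q_def)
qed

lemma approx_countermodel_of_model:
  fixes S :: "nat \<Rightarrow> 'a::topological_space set"
  assumes rel: "\<And>R i i'. rcc8_rel R (S i) (S i') \<longleftrightarrow> rcc8_coord d R (lower v i) (upper v i) (lower v i') (upper v i')"
    and proper: "\<And>i j. j < d \<Longrightarrow> lower v i j < upper v i j"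
    and SW: "range S \<subseteq> W"
    and wit: "\<And>i c R. c \<le> x \<Longrightarrow> fst (prod_decode c) = 3 + code_rel R \<Longrightarrow> \<not> sat W V (S i) (fm_of_code c) \<Longrightarrow>
       rcc8_rel R (S i) (S (witness x i c)) \<and> \<not> sat W V (S (witness x i c)) (fm_of_code (snd (prod_decode c)))"
    and root: "\<not> sat W V (S 0) (fm_of_code x)"
  shows "approx_countermodel x N d v (\<lambda>i c. sat W V (S i) (fm_of_code c))"
  unfolding approx_countermodel_def
proof (intro conjI allI impI)
  fix i i' c
  assume "rcc8_coord d EQ (lower v i) (upper v i) (lower v i') (upper v i')"
  then show "sat W V (S i) (fm_of_code c) = sat W V (S i') (fm_of_code c)"
    using rel[of EQ i i'] by simp
next
  fix i c
  show "sat W V (S i) (fm_of_code c) \<longleftrightarrow> \<not> sat W V (S i) (fm_of_code (snd (prod_decode c)))"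
    if "fst (prod_decode c) = 1"
    using that by (simp add: fm_of_code_Neg)
  show "sat W V (S i) (fm_of_code c) \<longleftrightarrow> sat W V (S i) (fm_of_code (fst (prod_decode (snd (prod_decode c))))) \<and>
      sat W V (S i) (fm_of_code (snd (prod_decode (snd (prod_decode c)))))"
    if "fst (prod_decode c) = 2"
    using that by (simp add: fm_of_code_Conj)
next
  fix i i' c R
  assume "fst (prod_decode c) = 3 + code_rel R \<and> sat W V (S i) (fm_of_code c) \<and>
    rcc8_coord d R (lower v i) (upper v i) (lower v i') (upper v i')"
  moreover have "S i' \<in> W"
    using SW by blast
  ultimately show "sat W V (S i') (fm_of_code (snd (prod_decode c)))"
    using rel[of R i i'] by (auto simp: fm_of_code_Box)
next
  fix i c R
  assume "c \<le> x" "fst (prod_decode c) = 3 + code_rel R \<and> \<not> sat W V (S i) (fm_of_code c)"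
  then show "rcc8_coord d R (lower v i) (upper v i) (lower v (witness x i c)) (upper v (witness x i c))"
    and "\<not> sat W V (S (witness x i c)) (fm_of_code (snd (prod_decode c)))"
    using wit[of c R i] rel by simp_all
qed (use proper root in blast)+

lemma approx_countermodels_if_not_valid:
  assumes "\<phi> \<notin> logic_S_rect TYPE('n::finite)"
  shows "\<exists>(v :: nat \<Rightarrow> nat \<Rightarrow> real) l. \<forall>N. approx_countermodel (code_fm \<phi>) N CARD('n) v l"
proof -
  obtain W :: "(real ^ 'n) set set" and V s where W: "W \<subseteq> rects" "s \<in> W" "\<not> sat W V s \<phi>"
    using assms unfolding logic_S_rect_def by blast
  obtain sel where sel_in: "\<And>w c. w \<in> W \<Longrightarrow> sel w c \<in> W"
    and sel: "\<And>w c R. w \<in> W \<Longrightarrow> fst (prod_decode c) = 3 + code_rel R \<Longrightarrow> \<not> sat W V w (fm_of_code c) \<Longrightarrow>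
      rcc8_rel R w (sel w c) \<and> \<not> sat W V (sel w c) (fm_of_code (snd (prod_decode c)))"
    using witness_selection[of W V] by blast
  let ?x = "code_fm \<phi>"
  define S where "S = witness_tree sel s ?x"
  have SW: "S i \<in> W" for i
    unfolding S_def by (rule witness_tree_closed[OF W(2) sel_in])
  have "\<exists>a b. S i = cbox a b \<and> (\<forall>k. a $ k < b $ k)" for i
    using W(1) SW[of i] unfolding rects_def by auto
  then obtain A B where S: "\<And>i. S i = cbox (A i) (B i)" and AB: "\<And>i k. A i $ k < B i $ k"
    by metis
  obtain h where h: "bij_betw h {..<CARD('n)} (UNIV :: 'n set)"
    using ex_bij_betw_lessThan_card by blast
  define v :: "nat \<Rightarrow> nat \<Rightarrow> real" where "v t j = (if even t then A (t div 2) else B (t div 2)) $ h j" for t j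
  have rel: "rcc8_rel R (S i) (S i') \<longleftrightarrow> rcc8_coord CARD('n) R (lower v i) (upper v i) (lower v i') (upper v i')"
    for R i i'
    unfolding S by (rule rcc8_rel_boxes_iff[OF h AB]) (simp add: v_def)
  have "approx_countermodel ?x N CARD('n) v (\<lambda>i c. sat W V (S i) (fm_of_code c))" for N
  proof (rule approx_countermodel_of_model[OF rel])
    show "lower v i j < upper v i j" for i j
      using AB by (simp add: v_def)
    show "range S \<subseteq> W"
      using SW by blast
    show "rcc8_rel R (S i) (S (witness ?x i c)) \<and> \<not> sat W V (S (witness ?x i c)) (fm_of_code (snd (prod_decode c)))"
      if "c \<le> ?x" "fst (prod_decode c) = 3 + code_rel R" "\<not> sat W V (S i) (fm_of_code c)" for i c R
      using sel[OF SW that(2,3)] unfolding S_def witness_tree_witness[OF that(1)] .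
    show "\<not> sat W V (S 0) (fm_of_code ?x)"
      using W(3) by (simp add: S_def)
  qed
  then show ?thesis
    by blast
qed

lemma valid_iff_not_refutable:
  "\<phi> \<in> logic_S_rect TYPE('n::finite) \<longleftrightarrow> (\<exists>N. \<not> refutable_at CARD('n) N (code_fm \<phi>))"
proof
  assume "\<phi> \<in> logic_S_rect TYPE('n)"
  then show "\<exists>N. \<not> refutable_at CARD('n) N (code_fm \<phi>)"
    using real_approx_countermodels not_valid_if_approx_countermodels by blast
next
  assume "\<exists>N. \<not> refutable_at CARD('n) N (code_fm \<phi>)"
  then show "\<phi> \<in> logic_S_rect TYPE('n)"
    using approx_countermodels_if_not_valid refutable_at_if_approx_countermodel by blast
qed

section \<open>Recognizing codes of formulas\<close>

text \<open>The bits of \<open>G\<close> mark a set of numbers containing \<open>x\<close> and closed under immediate subformulas;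
such a certificate replaces the course-of-values recursion that decoding would need.\<close>

definition subcodes_marked :: "nat \<Rightarrow> nat \<Rightarrow> bool" where
  "subcodes_marked G c \<longleftrightarrow> fst (prod_decode c) \<le> 10 \<and>
    (fst (prod_decode c) = 2 \<longrightarrow>
       bit G (fst (prod_decode (snd (prod_decode c)))) \<and> bit G (snd (prod_decode (snd (prod_decode c))))) \<and>
    (fst (prod_decode c) \<noteq> 0 \<and> fst (prod_decode c) \<noteq> 2 \<longrightarrow> bit G (snd (prod_decode c)))"

definition is_fm_code :: "nat \<Rightarrow> bool" where
  "is_fm_code x \<longleftrightarrow> (\<exists>G < (2::nat) ^ Suc x. bit G x \<and> (\<forall>c\<le>x. bit G c \<longrightarrow> subcodes_marked G c))"

lemma decidable_is_fm_code: "computable k X \<Longrightarrow> decidable k (\<lambda>xs. is_fm_code (X xs))"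
  unfolding is_fm_code_def subcodes_marked_def bit_iff_odd odd_iff_mod_2_eq_one
  by (intro computable_intros; simp)

lemma prod_decode_code_fm_cases:
  assumes "fst (prod_decode c) \<le> 10"
  obtains "fst (prod_decode c) = 0" | "fst (prod_decode c) = 1" | "fst (prod_decode c) = 2"
    | R where "fst (prod_decode c) = 3 + code_rel R"
proof -
  consider "fst (prod_decode c) < 3" | "3 \<le> fst (prod_decode c)" "fst (prod_decode c) - 3 < 8"
    using assms by linarith
  then show ?thesis
  proof cases
    case 2
    then have "fst (prod_decode c) = 3 + code_rel (rel_of_code (fst (prod_decode c) - 3))"
      by (auto simp: rel_of_code_def less_Suc_eq numeral_eq_Suc)
    with that show ?thesis by blast
  qed (use that in linarith)
qed

lemma prod_encode_in_range_code_fm: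
  shows "prod_encode (0, k) \<in> range code_fm"
    and "a \<in> range code_fm \<Longrightarrow> prod_encode (1, a) \<in> range code_fm"
    and "a \<in> range code_fm \<Longrightarrow> b \<in> range code_fm \<Longrightarrow> prod_encode (2, prod_encode (a, b)) \<in> range code_fm"
    and "a \<in> range code_fm \<Longrightarrow> prod_encode (3 + code_rel R, a) \<in> range code_fm"
  using rangeI[of code_fm "PVar k"] rangeI[of code_fm "Neg \<phi>" for \<phi>] rangeI[of code_fm "Conj \<phi> \<psi>" for \<phi> \<psi>]
    rangeI[of code_fm "Box R \<phi>" for \<phi>]
  by auto

lemma marked_codes_are_codes:
  assumes G: "\<And>c. c \<le> x \<Longrightarrow> bit G c \<Longrightarrow> subcodes_marked G c"
  shows "c \<le> x \<Longrightarrow> bit G c \<Longrightarrow> c \<in> range code_fm"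
proof (induction c rule: less_induct)
  case (less c)
  let ?t = "fst (prod_decode c)" and ?a = "snd (prod_decode c)"
  have c: "c = prod_encode (?t, ?a)"
    by simp
  note marked = G[OF less.prems, unfolded subcodes_marked_def]
  have sub: "?a < c" if "?t \<noteq> 0"
    using snd_prod_decode_less[OF that] .
  have sub_code: "?a \<in> range code_fm" if "?t \<noteq> 0" "?t \<noteq> 2"
    using marked that sub[OF that(1)] less.prems(1) less.IH[OF sub[OF that(1)]] by simp
  from marked[THEN conjunct1] show ?case
  proof (cases rule: prod_decode_code_fm_cases)
    case 1
    then show ?thesis
      by (metis c prod_encode_in_range_code_fm(1))
  next
    case 2
    then have "?a \<in> range code_fm"
      using sub_code by simp
    with 2 show ?thesis
      by (metis c prod_encode_in_range_code_fm(2))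
  next
    case 3
    let ?a1 = "fst (prod_decode ?a)" and ?a2 = "snd (prod_decode ?a)"
    have "?a1 < c" "?a2 < c"
      using sub 3 prod_decode_le[of ?a ?a] by simp_all
    then have "?a1 \<in> range code_fm" "?a2 \<in> range code_fm"
      using marked less.IH less.prems 3 by simp_all
    moreover have "c = prod_encode (2, prod_encode (?a1, ?a2))"
      using 3 by (metis prod.collapse prod_decode_inverse)
    ultimately show ?thesis
      by (metis prod_encode_in_range_code_fm(3))
  next
    case (4 R)
    then have "?a \<in> range code_fm"
      using sub_code by simp
    with 4 show ?thesis
      by (metis c prod_encode_in_range_code_fm(4))
  qed
qed

lemma is_fm_code_imp_code: "is_fm_code x \<Longrightarrow> x \<in> range code_fm"
  unfolding is_fm_code_def using marked_codes_are_codes by blast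

lemma is_fm_code_code_fm: "is_fm_code (code_fm \<phi>)"
proof -
  let ?x = "code_fm \<phi>"
  define g :: "nat \<Rightarrow> nat" where "g c = of_bool (c \<in> range code_fm)" for c
  define G where "G = (\<Sum>c<Suc ?x. g c * 2 ^ c)"
  have "g c < 2" for c
    by (simp add: g_def)
  note G_digits = digits_of_sum[of "Suc ?x" g 2, folded G_def]
  have bit_G: "bit G c \<longleftrightarrow> c \<in> range code_fm" if "c \<le> ?x" for c
    using G_digits(2)[of c] that \<open>\<And>c. g c < 2\<close> unfolding bit_iff_odd odd_iff_mod_2_eq_one g_def
    by simp
  have "subcodes_marked G c" if c: "c \<le> ?x" "bit G c" for c
  proof -
    obtain \<psi> where \<psi>: "c = code_fm \<psi>"
      using bit_G[OF c(1)] c(2) by blast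
    have bit_G': "bit G a \<longleftrightarrow> a \<in> range code_fm" if "a \<le> c" for a
      using bit_G that c(1) by simp
    show ?thesis
      unfolding subcodes_marked_def \<psi> using code_rel_le
      by (cases \<psi>) (simp_all add: \<psi> bit_G' code_fm_subformula_le[simplified])
  qed
  moreover have "bit G ?x"
    using bit_G by simp
  ultimately show ?thesis
    unfolding is_fm_code_def using G_digits(1) \<open>\<And>c. g c < 2\<close> by blast
qed

lemma is_fm_code_iff: "is_fm_code x \<longleftrightarrow> x \<in> range code_fm"
  using is_fm_code_imp_code is_fm_code_code_fm by blast

theorem theorem6p2:
  shows "re_fmset (logic_S_rect TYPE('n::finite))"
proof -
  have codes: "code_fm ` logic_S_rect TYPE('n) = {x. \<exists>N. is_fm_code x \<and> \<not> refutable_at CARD('n) N x}"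
    by (auto simp: valid_iff_not_refutable is_fm_code_iff intro!: image_eqI)
  have "re_set {x. \<exists>N. is_fm_code x \<and> \<not> refutable_at CARD('n) N x}"
    by (rule re_set_ex_decidable) (intro decidable_conj decidable_not decidable_is_fm_code
        decidable_refutable_at computable_const computable_nth; simp)
  then show ?thesis
    unfolding re_fmset_def codes .
qed

end
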